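(* Let $\ell\ge1$, $m\ge0$ and $\mu,\nu\in\Lambda^\ell_{st}(m)$. There exists a bijection $\varphi_\ell:\mathrm{ParMat}^\flat_{\nu,\mu}\to\mathrm{SST}^2_{\nu,\mu}$.
   Context: $\Lambda^\ell_{st}(m)$ is the set of $\ell$-tuples $\mu=(\mu^{(1)},\dots,\mu^{(\ell)})$ of possibly empty finite sequences of positive integers with total sum $m$; $\mathrm{Par}^\ell(m)$ the subset in which each $\mu^{(p)}$ is a partition (weakly decreasing). For $\mu,\nu\in\Lambda^\ell_{st}(m)$, $\mathrm{ParMat}^\flat_{\nu,\mu}$ is the set of pairs $(A,P)$ where $A=(a_{(p,i),(q,j)})$ is a matrix of nonnegative integers with rows indexed by $(p,i)$, $1\le p\le\ell$, $1\le i\le l(\nu^{(p)})$, and columns by $(q,j)$, $1\le q\le\ell$, $1\le j\le l(\mu^{(q)})$, such that $\sum_{q,j}a_{(p,i),(q,j)}=\nu^{(p)}_i$ and $\sum_{p,i}a_{(p,i),(q,j)}=\mu^{(q)}_j$, and $P=(\eta_{(p,i),(q,j)})$ where each $\eta_{(p,i),(q,j)}$ is a partition with all parts $\le a_{(p,i),(q,j)}$ and with at most $\min\{p,q\}-1$ parts. For $\lambda\in\mathrm{Par}^\ell(m)$ and $\mu\in\Lambda^\ell_{st}(m)$, a $\lambda$-tableau of type $\mu$ fills the Young diagrams of $\lambda^{(1)},\dots,\lambda^{(\ell)}$ with symbols $i_p=(i,p)$ ($p\in\{1,\dots,\ell\}$, $i\ge1$) so that $i_p$ occurs exactly $\mu^{(p)}_i$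 times; symbols are totally ordered by $(i_1,p_1)<(i_2,p_2)$ iff $p_1<p_2$, or $p_1=p_2$ and $i_1<i_2$. It is semistandard if, in each component, entries weakly increase along rows and strictly increase down columns, and every entry $i_p$ lying in the $j$-th component satisfies $p\ge j$. $\mathrm{SST}(\lambda,\mu)$ denotes the set of semistandard $\lambda$-tableaux of type $\mu$, and $\mathrm{SST}^2_{\nu,\mu}:=\bigcup_{\lambda\in\mathrm{Par}^\ell(m)}\mathrm{SST}(\lambda,\nu)\times\mathrm{SST}(\lambda,\mu)$. *)

theory Defs
  imports Main
begin

(* Conventions: an l-tuple of finite sequences is a list of length l of nat lists;
   component p (1-based) is  mu ! (p-1),  its i-th entry (1-based) is  mu ! (p-1) ! (i-1). *)

definition Lambda_st :: "nat \<Rightarrow> nat \<Rightarrow> nat list list set" where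
  "Lambda_st l m = {mu. length mu = l \<and> (\<forall>s\<in>set mu. \<forall>x\<in>set s. 0 < x)
                        \<and> (\<Sum>s\<leftarrow>mu. sum_list s) = m}"

definition is_partition :: "nat list \<Rightarrow> bool" where
  "is_partition s \<longleftrightarrow> sorted_wrt (\<ge>) s \<and> (\<forall>x\<in>set s. 0 < x)"

definition Par :: "nat \<Rightarrow> nat \<Rightarrow> nat list list set" where
  "Par l m = {la \<in> Lambda_st l m. \<forall>s\<in>set la. is_partition s}"

definition ent :: "nat list list \<Rightarrow> nat \<Rightarrow> nat \<Rightarrow> nat" where
  "ent mu p i = mu ! (p - 1) ! (i - 1)"

definition idx :: "nat list list \<Rightarrow> (nat \<times> nat) set" where
  "idx mu = {(p, i). 1 \<le> p \<and> p \<le> length mu \<and> 1 \<le> i \<and> i \<le> length (mu ! (p - 1))}"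

(* ParMat^flat_{nu,mu}: A is the matrix, P the matrix of partitions; both are
   functions on index pairs, taken to be trivial (0, resp. the empty partition)
   outside the index set, so that they are finite objects. *)
definition ParMat :: "nat list list \<Rightarrow> nat list list \<Rightarrow>
    (((nat \<times> nat) \<Rightarrow> (nat \<times> nat) \<Rightarrow> nat) \<times> ((nat \<times> nat) \<Rightarrow> (nat \<times> nat) \<Rightarrow> nat list)) set" where
  "ParMat nu mu = {(A, P).
     (\<forall>r c. (r, c) \<notin> idx nu \<times> idx mu \<longrightarrow> A r c = 0 \<and> P r c = []) \<and>
     (\<forall>(p, i)\<in>idx nu. (\<Sum>c\<in>idx mu. A (p, i) c) = ent nu p i) \<and>
     (\<forall>(q, j)\<in>idx mu. (\<Sum>r\<in>idx nu. A r (q, j)) = ent mu q j) \<and>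
     (\<forall>(p, i)\<in>idx nu. \<forall>(q, j)\<in>idx mu.
        is_partition (P (p, i) (q, j)) \<and>
        (\<forall>x\<in>set (P (p, i) (q, j)). x \<le> A (p, i) (q, j)) \<and>
        length (P (p, i) (q, j)) \<le> min p q - 1)}"

(* symbols i_p are pairs (i, p); total order on symbols *)
definition sym_less :: "nat \<times> nat \<Rightarrow> nat \<times> nat \<Rightarrow> bool" where
  "sym_less a b \<longleftrightarrow> snd a < snd b \<or> (snd a = snd b \<and> fst a < fst b)"

definition sym_le :: "nat \<times> nat \<Rightarrow> nat \<times> nat \<Rightarrow> bool" where
  "sym_le a b \<longleftrightarrow> sym_less a b \<or> a = b"

definition Cells :: "nat list list \<Rightarrow> (nat \<times> nat \<times> nat) set" where
  "Cells la = {(j, r, c). 1 \<le> j \<and> j \<le> length la \<and> 1 \<le> r \<and> r \<le> length (la ! (j - 1))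
                 \<and> 1 \<le> c \<and> c \<le> la ! (j - 1) ! (r - 1)}"

definition tableau :: "nat list list \<Rightarrow> nat list list \<Rightarrow> (nat \<times> nat \<times> nat \<Rightarrow> nat \<times> nat) \<Rightarrow> bool" where
  "tableau la mu T \<longleftrightarrow>
     (\<forall>x. x \<notin> Cells la \<longrightarrow> T x = (0, 0)) \<and>
     (\<forall>x\<in>Cells la. (snd (T x), fst (T x)) \<in> idx mu) \<and>
     (\<forall>(p, i)\<in>idx mu. card {x \<in> Cells la. T x = (i, p)} = ent mu p i)"

definition semistandard :: "nat list list \<Rightarrow> (nat \<times> nat \<times> nat \<Rightarrow> nat \<times> nat) \<Rightarrow> bool" where
  "semistandard la T \<longleftrightarrow>
     (\<forall>j r c. (j, r, c) \<in> Cells la \<and> (j, r, Suc c) \<in> Cells la \<longrightarrow> sym_le (T (j, r, c)) (T (j, r, Suc c))) \<and>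
     (\<forall>j r c. (j, r, c) \<in> Cells la \<and> (j, Suc r, c) \<in> Cells la \<longrightarrow> sym_less (T (j, r, c)) (T (j, Suc r, c))) \<and>
     (\<forall>j r c. (j, r, c) \<in> Cells la \<longrightarrow> j \<le> snd (T (j, r, c)))"

definition SST :: "nat list list \<Rightarrow> nat list list \<Rightarrow> (nat \<times> nat \<times> nat \<Rightarrow> nat \<times> nat) set" where
  "SST la mu = {T. tableau la mu T \<and> semistandard la T}"

definition SST2 :: "nat \<Rightarrow> nat \<Rightarrow> nat list list \<Rightarrow> nat list list \<Rightarrow>
    ((nat \<times> nat \<times> nat \<Rightarrow> nat \<times> nat) \<times> (nat \<times> nat \<times> nat \<Rightarrow> nat \<times> nat)) set" where
  "SST2 l m nu mu = (\<Union>la\<in>Par l m. SST la nu \<times> SST la mu)"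

end

theory Submission
  imports Defs "HOL-Library.FuncSet" "HOL-Library.Product_Lexorder"
begin

text \<open>Both sides are counted in the graded graph of multipartitions whose up steps
  \<open>U\<^sub>p\<^sub>,\<^sub>b\<close> add horizontal strips with \<open>b\<close> cells in total to the components \<open>1, \<dots>, p\<close>, and whose
  down steps \<open>D\<^sub>q\<^sub>,\<^sub>a\<close> are the reverse steps.
  Removing the cells holding the largest letter of a semistandard tableau of type \<open>\<mu>\<close> removes
  such a strip, so \<open>|SST(\<lambda>, \<mu>)|\<close> counts the walks from \<open>\<emptyset>\<close> to \<open>\<lambda>\<close> by up steps dictated by
  \<open>\<mu>\<close> and also the walks from \<open>\<lambda>\<close> back to \<open>\<emptyset>\<close>; hence \<open>|SST\<^sup>2\<^sub>\<nu>\<^sub>,\<^sub>\<mu>|\<close> is the number of walks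
  \<open>\<emptyset> \<rightarrow> \<emptyset>\<close> that first go up along \<open>\<mu>\<close> and then down along \<open>\<nu>\<close>.
  A growth-diagram bijection for two horizontal strips gives the commutation relation
  \<open>U\<^sub>p\<^sub>,\<^sub>b D\<^sub>q\<^sub>,\<^sub>a = \<Sum>\<^sub>k c(min p q, k) D\<^sub>q\<^sub>,\<^sub>a\<^sub>-\<^sub>k U\<^sub>p\<^sub>,\<^sub>b\<^sub>-\<^sub>k\<close> (as walk counts), where \<open>c(r, k)\<close> is the number of
  weak compositions of \<open>k\<close> into \<open>r\<close> parts, i.e. of partitions with at most \<open>r - 1\<close> parts
  bounded by \<open>k\<close>. Moving all down steps to the front, every walk \<open>\<emptyset> \<rightarrow> \<emptyset>\<close> is accounted for by
  a matrix \<open>A\<close> (the cells \<open>k\<close> exchanged between the step of row \<open>(p, i)\<close> and the step of column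
  \<open>(q, j)\<close>) together with a partition in every entry, i.e. by an element of \<open>ParMat\<close>.
  Equal finite cardinalities then give the bijection.\<close>

section \<open>Multipartitions as row-length functions\<close>

text \<open>An \<open>mshape\<close> \<open>g\<close> describes a tuple of diagrams: \<open>g j r\<close> is the length of row \<open>r + 1\<close>
  of component \<open>j\<close>. Components are numbered from 1 as in the statement (component 0 stays empty),
  rows from 0; the cells \<open>(j, r, c)\<close> use 1-based rows and columns, like \<open>Cells\<close>.\<close>

type_synonym mshape = "nat \<Rightarrow> nat \<Rightarrow> nat"

definition cells :: "mshape \<Rightarrow> (nat \<times> nat \<times> nat) set" where
  "cells g = {(j, r, c). 1 \<le> r \<and> 1 \<le> c \<and> c \<le> g j (r - 1)}"

definition fin_support :: "mshape \<Rightarrow> bool" where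
  "fin_support g \<longleftrightarrow> finite {(j, r). g j r \<noteq> 0}"

definition msize :: "mshape \<Rightarrow> nat" where
  "msize g = card (cells g)"

definition mempty :: mshape where
  "mempty = (\<lambda>_ _. 0)"

definition is_mpartition :: "mshape \<Rightarrow> bool" where
  "is_mpartition g \<longleftrightarrow> (\<forall>r. g 0 r = 0) \<and> (\<forall>j r. g j (Suc r) \<le> g j r)"

definition hstrip :: "(nat \<Rightarrow> nat) \<Rightarrow> (nat \<Rightarrow> nat) \<Rightarrow> bool" where
  "hstrip r l \<longleftrightarrow> (\<forall>i. r i \<le> l i \<and> l (Suc i) \<le> r i)"

definition hstrips :: "nat \<Rightarrow> mshape \<Rightarrow> mshape \<Rightarrow> bool" where
  "hstrips p x y \<longleftrightarrow> (\<forall>j. 1 \<le> j \<and> j \<le> p \<longrightarrow> hstrip (x j) (y j)) \<and> (\<forall>j. \<not> (1 \<le> j \<and> j \<le> p) \<longrightarrow> y j = x j)"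

definition strip_step :: "nat \<Rightarrow> nat \<Rightarrow> mshape \<Rightarrow> mshape \<Rightarrow> bool" where
  "strip_step p b x y \<longleftrightarrow> hstrips p x y \<and> fin_support x \<and> fin_support y \<and> msize y = msize x + b"

lemma mem_cells_iff: "(j, r, c) \<in> cells g \<longleftrightarrow> 1 \<le> r \<and> 1 \<le> c \<and> c \<le> g j (r - 1)"
  unfolding cells_def by simp

lemma cells_left_closed: "(j, r, c) \<in> cells g \<Longrightarrow> 1 \<le> c' \<Longrightarrow> c' \<le> c \<Longrightarrow> (j, r, c') \<in> cells g"
  unfolding mem_cells_iff by simp

lemma cells_mono: "(\<And>j i. y j i \<le> x j i) \<Longrightarrow> cells y \<subseteq> cells x"
  unfolding cells_def by (auto intro: le_trans)

lemma cells_subset_imp_le: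
  assumes "cells g \<subseteq> cells g'"
  shows "g j r \<le> g' j r"
proof (cases "g j r = 0")
  case False
  then have "(j, Suc r, g j r) \<in> cells g"
    by (simp add: mem_cells_iff)
  with assms have "(j, Suc r, g j r) \<in> cells g'"
    by blast
  then show ?thesis
    by (simp add: mem_cells_iff)
qed simp

lemma cells_inject:
  assumes "cells g = cells g'"
  shows "g = g'"
proof (intro ext antisym)
  show "g j r \<le> g' j r" "g' j r \<le> g j r" for j r
    using assms by (simp_all add: cells_subset_imp_le)
qed

lemma cells_mempty_iff: "cells g = {} \<longleftrightarrow> g = mempty"
proof
  assume "cells g = {}"
  then have "g j r = 0" for j r
    using mem_cells_iff[of j "Suc r" 1 g] by auto
  then show "g = mempty"
    unfolding mempty_def by (intro ext)
qed (simp add: cells_def mempty_def)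

lemma cells_eq_image:
  "cells g = (\<lambda>((j, r), c). (j, Suc r, c)) ` (SIGMA jr:{(j, r). g j r \<noteq> 0}. {1..g (fst jr) (snd jr)})"
  unfolding cells_def
  apply (auto simp: image_def)
  subgoal for j r c
    by (rule exI[where x="r - 1"]) auto
  done

lemma finite_cells: "fin_support g \<Longrightarrow> finite (cells g)"
  unfolding cells_eq_image fin_support_def by auto

lemma msize_eq_sum:
  assumes "fin_support g" "finite D" "{(j, r). g j r \<noteq> 0} \<subseteq> D"
  shows "msize g = (\<Sum>(j, r)\<in>D. g j r)"
proof -
  let ?S = "{(j, r). g j r \<noteq> 0}"
  have inj: "inj_on (\<lambda>((j, r), c). (j, Suc r, c)) (SIGMA jr:?S. {1..g (fst jr) (snd jr)})"
    by (auto simp: inj_on_def)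
  have "msize g = card (SIGMA jr:?S. {1..g (fst jr) (snd jr)})"
    unfolding msize_def cells_eq_image using card_image[OF inj] by simp
  also have "\<dots> = (\<Sum>jr\<in>?S. g (fst jr) (snd jr))"
    using assms(1) unfolding fin_support_def by (subst card_SigmaI) auto
  also have "\<dots> = (\<Sum>jr\<in>D. g (fst jr) (snd jr))"
    using assms by (intro sum.mono_neutral_left) auto
  finally show ?thesis
    by (simp add: case_prod_beta')
qed

lemma fin_support_bounded:
  assumes "fin_support g"
  obtains N where "\<And>j i. g j i \<noteq> 0 \<Longrightarrow> j < N \<and> i < N"
proof -
  let ?S = "{(j, i). g j i \<noteq> 0}"
  have "finite (fst ` ?S \<union> snd ` ?S)"
    using assms unfolding fin_support_def by simp
  then obtain N where N: "\<forall>n \<in> fst ` ?S \<union> snd ` ?S. n < N"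
    unfolding finite_nat_set_iff_bounded by blast
  show thesis
  proof (rule that)
    fix j i
    assume "g j i \<noteq> 0"
    then have "j \<in> fst ` ?S" "i \<in> snd ` ?S"
      by force+
    then show "j < N \<and> i < N"
      using N by blast
  qed
qed

lemma msize_eq_box_sum:
  assumes "fin_support g" "\<And>j i. g j i \<noteq> 0 \<Longrightarrow> j < N \<and> i < N"
  shows "msize g = (\<Sum>j<N. \<Sum>i<N. g j i)"
proof -
  have "msize g = (\<Sum>(j, i)\<in>{..<N} \<times> {..<N}. g j i)"
    using assms by (intro msize_eq_sum) auto
  then show ?thesis
    by (simp add: sum.cartesian_product)
qed

lemma fin_support_le:
  assumes "fin_support x" "\<And>j i. y j i \<le> x j i"
  shows "fin_support y"
proof -
  have "y j r \<noteq> 0 \<Longrightarrow> x j r \<noteq> 0" for j r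
    using assms(2)[of j r] by linarith
  then have "{(j, r). y j r \<noteq> 0} \<subseteq> {(j, r). x j r \<noteq> 0}"
    by blast
  then show ?thesis
    using assms(1) unfolding fin_support_def by (rule finite_subset)
qed

lemma fin_support_mempty: "fin_support mempty"
  unfolding fin_support_def mempty_def by simp

lemma msize_mono: "fin_support x \<Longrightarrow> (\<And>j i. y j i \<le> x j i) \<Longrightarrow> msize y \<le> msize x"
  unfolding msize_def by (intro card_mono finite_cells cells_mono)

lemma row_le_msize:
  assumes "fin_support g"
  shows "g j r \<le> msize g"
proof -
  have "card ((\<lambda>c. (j, Suc r, c)) ` {1..g j r}) \<le> card (cells g)"
    using finite_cells[OF assms] by (intro card_mono) (auto simp: mem_cells_iff)
  then show ?thesis
    unfolding msize_def by (simp add: card_image inj_on_def)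
qed

lemma finite_pointwise_le:
  assumes "fin_support x"
  shows "finite {y. \<forall>j i. y j i \<le> x j i}"
proof -
  let ?S = "{(j, r). x j r \<noteq> 0}"
  let ?F = "{f. \<forall>p. (p \<in> ?S \<longrightarrow> f p \<in> (\<Union>q\<in>?S. {..case_prod x q})) \<and> (p \<notin> ?S \<longrightarrow> f p = 0)}"
  have fin: "finite ?F"
    using assms unfolding fin_support_def by (intro finite_set_of_finite_funs) auto
  have "y \<in> curry ` ?F" if le: "\<forall>j i. y j i \<le> x j i" for y
  proof -
    have "case_prod y \<in> ?F"
    proof (intro CollectI allI)
      fix p :: "nat \<times> nat"
      obtain j r where p: "p = (j, r)"
        by (cases p)
      have "y j r \<le> x j r"
        using le by blast
      then show "(p \<in> ?S \<longrightarrow> case_prod y p \<in> (\<Union>q\<in>?S. {..case_prod x q})) \<and> (p \<notin> ?S \<longrightarrow> case_prod y p = 0)"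
        unfolding p by auto
    qed
    then show ?thesis
      by (rule image_eqI[rotated]) simp
  qed
  then have "{y. \<forall>j i. y j i \<le> x j i} \<subseteq> curry ` ?F"
    by blast
  then show ?thesis
    using finite_imageI[OF fin] by (rule finite_subset)
qed

lemma hstripsD:
  assumes "hstrips p x y"
  shows "1 \<le> j \<Longrightarrow> j \<le> p \<Longrightarrow> hstrip (x j) (y j)" "\<not> (1 \<le> j \<and> j \<le> p) \<Longrightarrow> y j = x j"
  using assms unfolding hstrips_def by auto

lemma hstrips_le: "hstrips p x y \<Longrightarrow> x j i \<le> y j i"
  unfolding hstrips_def hstrip_def by (cases "1 \<le> j \<and> j \<le> p") auto

lemma strip_step_le: "strip_step p b x y \<Longrightarrow> x j i \<le> y j i"
  unfolding strip_step_def by (blast intro: hstrips_le)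

lemma strip_step_fin_support: "strip_step p b x y \<Longrightarrow> fin_support x \<and> fin_support y"
  unfolding strip_step_def by simp

lemma support_hstrips_succ:
  assumes "hstrips p x y"
  shows "{(j, r). y j r \<noteq> 0} \<subseteq>
      {(j, r). x j r \<noteq> 0} \<union> {1..p} \<times> {0} \<union> apsnd Suc ` {(j, r). x j r \<noteq> 0}"
    (is "_ \<subseteq> ?S \<union> _ \<union> ?T")
proof (rule subsetI)
  fix z
  assume "z \<in> {(j, r). y j r \<noteq> 0}"
  then obtain j r where z: "z = (j, r)" and y: "y j r \<noteq> 0"
    by blast
  show "z \<in> ?S \<union> {1..p} \<times> {0} \<union> ?T"
  proof (cases "z \<in> ?S \<union> ?T")
    case False
    then have x: "x j r = 0" and not_shifted: "(j, r) \<notin> ?T"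
      using z by auto
    have j: "1 \<le> j \<and> j \<le> p"
      using assms x y unfolding hstrips_def by metis
    have "r = 0"
    proof (rule ccontr)
      assume "r \<noteq> 0"
      then obtain r' where r: "r = Suc r'"
        using not0_implies_Suc by blast
      then have "x j r' = 0"
        using not_shifted by (metis (mono_tags) apsnd_conv case_prodI image_eqI mem_Collect_eq)
      moreover have "y j (Suc r') \<le> x j r'"
        using assms j unfolding hstrips_def hstrip_def by blast
      ultimately show False
        using y r by simp
    qed
    with j z show ?thesis
      by simp
  qed blast
qed

lemma fin_support_hstrips_succ:
  assumes "fin_support x" "hstrips p x y"
  shows "fin_support y"
proof -
  have "finite ({(j, r). x j r \<noteq> 0} \<union> {1..p} \<times> {0} \<union> apsnd Suc ` {(j, r). x j r \<noteq> 0})"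
    using assms(1) unfolding fin_support_def by simp
  with support_hstrips_succ[OF assms(2)] show ?thesis
    unfolding fin_support_def by (rule finite_subset)
qed

lemma finite_strip_preds: "finite {y. strip_step q a y x}"
proof (cases "fin_support x")
  case True
  have "{y. strip_step q a y x} \<subseteq> {y. \<forall>j i. y j i \<le> x j i}"
    using strip_step_le by blast
  then show ?thesis
    using finite_pointwise_le[OF True] by (rule finite_subset)
qed (simp add: strip_step_def)

lemma finite_strip_succs: "finite {y. strip_step p b x y}"
proof (cases "fin_support x")
  case True
  define E where "E = {(j, r). x j r \<noteq> 0} \<union> {1..p} \<times> {0} \<union> apsnd Suc ` {(j, r). x j r \<noteq> 0}"
  define z where "z j r = (if (j, r) \<in> E then msize x + b else 0)" for j r
  have "finite E"
    using True unfolding E_def fin_support_def by simp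
  moreover have "{(j, r). z j r \<noteq> 0} \<subseteq> E"
    unfolding z_def by auto
  ultimately have "fin_support z"
    unfolding fin_support_def by (blast intro: finite_subset)
  moreover have "y j r \<le> z j r" if "strip_step p b x y" for y j r
  proof -
    have "{(j, r). y j r \<noteq> 0} \<subseteq> E"
      using that support_hstrips_succ unfolding E_def strip_step_def by blast
    moreover have "y j r \<le> msize x + b"
      using that row_le_msize unfolding strip_step_def by metis
    ultimately show ?thesis
      unfolding z_def by auto
  qed
  ultimately show ?thesis
    by (blast intro: finite_subset[OF _ finite_pointwise_le])
qed (simp add: strip_step_def)

lemma strip_step_into_mempty: "strip_step p b x mempty \<longleftrightarrow> x = mempty \<and> b = 0"
proof
  assume step: "strip_step p b x mempty"
  then have "x = mempty"
    using strip_step_le[OF step] by (auto simp: mempty_def intro!: ext)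
  with step show "x = mempty \<and> b = 0"
    unfolding strip_step_def by simp
qed (simp add: strip_step_def hstrips_def hstrip_def fin_support_def mempty_def)

lemma is_mpartition_mempty: "is_mpartition mempty"
  unfolding is_mpartition_def mempty_def by simp

lemma is_mpartition_antimono:
  assumes "is_mpartition g" "r' \<le> r"
  shows "g j r \<le> g j r'"
  using assms lift_Suc_antimono_le[of "g j" r' r] unfolding is_mpartition_def by blast

lemma is_mpartition_hstrips:
  assumes "hstrips p x y"
  shows "is_mpartition x \<longleftrightarrow> is_mpartition y"
proof -
  have "x 0 = y 0"
    using assms unfolding hstrips_def by simp
  moreover have "x j (Suc r) \<le> x j r \<and> y j (Suc r) \<le> y j r" if "1 \<le> j" "j \<le> p" for j r
    using assms that unfolding hstrips_def hstrip_def by (meson le_trans)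
  moreover have "x j = y j" if "\<not> (1 \<le> j \<and> j \<le> p)" for j
    using assms that unfolding hstrips_def by simp
  ultimately show ?thesis
    unfolding is_mpartition_def by (metis not_one_le_zero)
qed

lemma is_mpartition_strip_step: "strip_step p b x y \<Longrightarrow> is_mpartition x \<longleftrightarrow> is_mpartition y"
  unfolding strip_step_def using is_mpartition_hstrips by blast

section \<open>The local rule for two horizontal strips\<close>

text \<open>The local rule of a growth diagram for horizontal strips. If \<open>l / r\<close> and \<open>l / t\<close> are
  horizontal strips, then \<open>k = grow_down r t l\<close> makes \<open>r / k\<close> and \<open>t / k\<close> horizontal strips with
  \<open>k i + l (i + 1) = min (r i) (t i) + max (r (i + 1)) (t (i + 1))\<close>; \<open>grow_excess\<close> counts the cells
  of the first row of \<open>l\<close> not forced by \<open>r\<close> and \<open>t\<close>, and \<open>grow_up\<close> recovers \<open>l\<close> from \<open>k\<close> and it.\<close>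

definition grow_down :: "(nat \<Rightarrow> nat) \<Rightarrow> (nat \<Rightarrow> nat) \<Rightarrow> (nat \<Rightarrow> nat) \<Rightarrow> (nat \<Rightarrow> nat)" where
  "grow_down r t l = (\<lambda>i. min (r i) (t i) + max (r (Suc i)) (t (Suc i)) - l (Suc i))"

definition grow_excess :: "(nat \<Rightarrow> nat) \<Rightarrow> (nat \<Rightarrow> nat) \<Rightarrow> (nat \<Rightarrow> nat) \<Rightarrow> nat" where
  "grow_excess r t l = l 0 - max (r 0) (t 0)"

definition grow_up :: "(nat \<Rightarrow> nat) \<Rightarrow> (nat \<Rightarrow> nat) \<Rightarrow> (nat \<Rightarrow> nat) \<Rightarrow> nat \<Rightarrow> (nat \<Rightarrow> nat)" where
  "grow_up r t k e = (\<lambda>i. case i of 0 \<Rightarrow> e + max (r 0) (t 0)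
      | Suc i' \<Rightarrow> min (r i') (t i') + max (r i) (t i) - k i')"

lemma hstrip_grow_down:
  assumes "hstrip r l" "hstrip t l"
  shows "hstrip (grow_down r t l) r" "hstrip (grow_down r t l) t"
proof -
  have a: "r i \<le> l i" "l (Suc i) \<le> r i" "t i \<le> l i" "l (Suc i) \<le> t i" for i
    using assms unfolding hstrip_def by auto
  have "max (r (Suc i)) (t (Suc i)) \<le> grow_down r t l i \<and> grow_down r t l i \<le> min (r i) (t i)" for i
    using a[of i] a[of "Suc i"] unfolding grow_down_def by (auto simp: min_def max_def)
  then show "hstrip (grow_down r t l) r" "hstrip (grow_down r t l) t"
    unfolding hstrip_def by auto
qed

lemma hstrip_grow_up:
  assumes "hstrip k r" "hstrip k t"
  shows "hstrip r (grow_up r t k e)" "hstrip t (grow_up r t k e)"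
proof -
  have a: "k i \<le> r i" "r (Suc i) \<le> k i" "k i \<le> t i" "t (Suc i) \<le> k i" for i
    using assms unfolding hstrip_def by auto
  have "max (r i) (t i) \<le> grow_up r t k e i \<and> grow_up r t k e (Suc i) \<le> min (r i) (t i)" for i
    using a[of "i - 1"] a[of i] unfolding grow_up_def by (cases i) auto
  then show "hstrip r (grow_up r t k e)" "hstrip t (grow_up r t k e)"
    unfolding hstrip_def by auto
qed

lemma grow_up_grow_down:
  assumes "hstrip r l" "hstrip t l"
  shows "grow_up r t (grow_down r t l) (grow_excess r t l) = l"
proof
  fix i
  have a: "r i \<le> l i" "l (Suc i) \<le> r i" "t i \<le> l i" "l (Suc i) \<le> t i" for i
    using assms unfolding hstrip_def by auto
  show "grow_up r t (grow_down r t l) (grow_excess r t l) i = l i"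
    unfolding grow_up_def grow_down_def grow_excess_def
    using a[of 0] a[of "i - 1"] a[of i] by (cases i) auto
qed

lemma grow_down_grow_up:
  assumes "hstrip k r" "hstrip k t"
  shows "grow_down r t (grow_up r t k e) = k" "grow_excess r t (grow_up r t k e) = e"
proof -
  have a: "k i \<le> r i" "r (Suc i) \<le> k i" "k i \<le> t i" "t (Suc i) \<le> k i" for i
    using assms unfolding hstrip_def by auto
  show "grow_down r t (grow_up r t k e) = k"
  proof
    show "grow_down r t (grow_up r t k e) i = k i" for i
      unfolding grow_up_def grow_down_def using a[of i] by simp
  qed
  show "grow_excess r t (grow_up r t k e) = e"
    unfolding grow_excess_def grow_up_def by simp
qed

lemma grow_down_sum:
  assumes "hstrip r l" "hstrip t l" "\<forall>i\<ge>N. r i = 0 \<and> t i = 0"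
  shows "(\<Sum>i<Suc N. l i) + (\<Sum>i<Suc N. grow_down r t l i) =
    (\<Sum>i<Suc N. r i) + (\<Sum>i<Suc N. t i) + grow_excess r t l"
proof -
  have a: "r i \<le> l i" "l (Suc i) \<le> r i" "t i \<le> l i" "l (Suc i) \<le> t i" for i
    using assms unfolding hstrip_def by auto
  have "grow_down r t l N = 0"
    unfolding grow_down_def using assms(3) a[of N] a[of "Suc N"] by auto
  then have "(\<Sum>i<Suc N. grow_down r t l i) = (\<Sum>i<N. grow_down r t l i)"
    by simp
  moreover have "l (Suc i) + grow_down r t l i = min (r i) (t i) + max (r (Suc i)) (t (Suc i))" for i
    unfolding grow_down_def using a[of i] a[of "Suc i"] by simp
  then have "(\<Sum>i<N. l (Suc i)) + (\<Sum>i<N. grow_down r t l i) =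
      (\<Sum>i<N. min (r i) (t i)) + (\<Sum>i<N. max (r (Suc i)) (t (Suc i)))"
    by (simp add: sum.distrib[symmetric])
  moreover have "(\<Sum>i<Suc N. l i) = (\<Sum>i<N. l (Suc i)) + l 0"
    by (subst sum.lessThan_Suc_shift) simp
  moreover have "(\<Sum>i<N. max (r (Suc i)) (t (Suc i))) + max (r 0) (t 0) = (\<Sum>i<Suc N. max (r i) (t i))"
    by (subst sum.lessThan_Suc_shift) simp
  moreover have "(\<Sum>i<N. min (r i) (t i)) + (\<Sum>i<N. max (r i) (t i)) = (\<Sum>i<N. r i) + (\<Sum>i<N. t i)"
    by (simp add: sum.distrib[symmetric]) (rule sum.cong, auto)
  moreover have "l 0 = grow_excess r t l + max (r 0) (t 0)"
    unfolding grow_excess_def using a[of 0] by simp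
  ultimately show ?thesis
    using assms(3) by simp
qed

section \<open>Commuting an up step past a down step\<close>

definition mgrow_down :: "nat \<Rightarrow> nat \<Rightarrow> mshape \<Rightarrow> mshape \<Rightarrow> mshape \<Rightarrow> mshape" where
  "mgrow_down p q x t l =
    (\<lambda>j. if 1 \<le> j \<and> j \<le> min p q then grow_down (x j) (t j) (l j) else if j \<le> q then t j else x j)"

definition mgrow_excess :: "nat \<Rightarrow> nat \<Rightarrow> mshape \<Rightarrow> mshape \<Rightarrow> mshape \<Rightarrow> nat \<Rightarrow> nat" where
  "mgrow_excess p q x t l = (\<lambda>j. if 1 \<le> j \<and> j \<le> min p q then grow_excess (x j) (t j) (l j) else 0)"

definition mgrow_up :: "nat \<Rightarrow> nat \<Rightarrow> mshape \<Rightarrow> mshape \<Rightarrow> mshape \<Rightarrow> (nat \<Rightarrow> nat) \<Rightarrow> mshape" where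
  "mgrow_up p q x t y e =
    (\<lambda>j. if 1 \<le> j \<and> j \<le> min p q then grow_up (x j) (t j) (y j) (e j) else if j \<le> p then t j else x j)"

definition wcomps :: "nat \<Rightarrow> nat \<Rightarrow> (nat \<Rightarrow> nat) set" where
  "wcomps r k = {e. (\<forall>j. \<not> (1 \<le> j \<and> j \<le> r) \<longrightarrow> e j = 0) \<and> (\<Sum>j\<in>{1..r}. e j) = k}"

definition strip_joins :: "nat \<Rightarrow> nat \<Rightarrow> nat \<Rightarrow> nat \<Rightarrow> mshape \<Rightarrow> mshape \<Rightarrow> mshape set" where
  "strip_joins p q b a x t = {l. strip_step p b x l \<and> strip_step q a t l}"

definition strip_meets :: "nat \<Rightarrow> nat \<Rightarrow> nat \<Rightarrow> nat \<Rightarrow> mshape \<Rightarrow> mshape \<Rightarrow> nat \<Rightarrow> mshape set" where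
  "strip_meets p q b a x t k = {y. strip_step q (a - k) y x \<and> strip_step p (b - k) y t}"

lemma component_cases:
  fixes j p q :: nat
  obtains (both) "1 \<le> j" "j \<le> p" "j \<le> q"
  | (zero) "j = 0"
  | (left) "q < j" "j \<le> p"
  | (right) "p < j" "j \<le> q"
  | (neither) "p < j" "q < j"
  by linarith

lemma hstrips_mgrow_down:
  assumes "hstrips p x l" "hstrips q t l"
  defines "y \<equiv> mgrow_down p q x t l"
  shows "hstrips q y x" "hstrips p y t"
proof -
  note x = hstripsD[OF assms(1)] and t = hstripsD[OF assms(2)]
  have "hstrip (y j) (x j)" if "1 \<le> j" "j \<le> q" for j
    using that x(2)[of j] t(1)[of j] hstrip_grow_down(1)[OF x(1) t(1), of j]
    unfolding y_def mgrow_down_def by (cases "j \<le> p") simp_all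
  moreover have "x j = y j" if "\<not> (1 \<le> j \<and> j \<le> q)" for j
    using that x(2)[of 0] t(2)[of 0] x(2)[of j] t(2)[of j] unfolding y_def mgrow_down_def by (cases "j = 0") auto
  moreover have "hstrip (y j) (t j)" if "1 \<le> j" "j \<le> p" for j
    using that x(1)[of j] t(2)[of j] hstrip_grow_down(2)[OF x(1) t(1), of j]
    unfolding y_def mgrow_down_def by (cases "j \<le> q") simp_all
  moreover have "t j = y j" if "\<not> (1 \<le> j \<and> j \<le> p)" for j
    using that x(2)[of 0] t(2)[of 0] x(2)[of j] t(2)[of j] unfolding y_def mgrow_down_def by (cases "j = 0") auto
  ultimately show "hstrips q y x" "hstrips p y t"
    unfolding hstrips_def by auto
qed

lemma hstrips_mgrow_up:
  fixes e :: "nat \<Rightarrow> nat"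
  assumes "hstrips q y x" "hstrips p y t"
  defines "l \<equiv> mgrow_up p q x t y e"
  shows "hstrips p x l" "hstrips q t l"
proof -
  note x = hstripsD[OF assms(1)] and t = hstripsD[OF assms(2)]
  have "hstrip (x j) (l j)" if "1 \<le> j" "j \<le> p" for j
    using that x(2)[of j] t(1)[of j] hstrip_grow_up(1)[OF x(1) t(1), of j]
    unfolding l_def mgrow_up_def by (cases "j \<le> q") simp_all
  moreover have "l j = x j" if "\<not> (1 \<le> j \<and> j \<le> p)" for j
    using that x(2)[of 0] t(2)[of 0] x(2)[of j] t(2)[of j] unfolding l_def mgrow_up_def by (cases "j = 0") auto
  moreover have "hstrip (t j) (l j)" if "1 \<le> j" "j \<le> q" for j
    using that x(1)[of j] t(2)[of j] hstrip_grow_up(2)[OF x(1) t(1), of j]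
    unfolding l_def mgrow_up_def by (cases "j \<le> p") simp_all
  moreover have "l j = t j" if "\<not> (1 \<le> j \<and> j \<le> q)" for j
    using that x(2)[of 0] t(2)[of 0] x(2)[of j] t(2)[of j] unfolding l_def mgrow_up_def by (cases "j = 0") auto
  ultimately show "hstrips p x l" "hstrips q t l"
    unfolding hstrips_def by auto
qed

lemma mgrow_up_mgrow_down:
  assumes "hstrips p x l" "hstrips q t l"
  shows "mgrow_up p q x t (mgrow_down p q x t l) (mgrow_excess p q x t l) = l"
proof
  fix j
  note x = hstripsD[OF assms(1)] and t = hstripsD[OF assms(2)]
  show "mgrow_up p q x t (mgrow_down p q x t l) (mgrow_excess p q x t l) j = l j"
    using x(2)[of j] t(2)[of j] grow_up_grow_down[OF x(1) t(1), of j]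
    unfolding mgrow_up_def mgrow_down_def mgrow_excess_def by (cases j rule: component_cases[of _ p q]) auto
qed

lemma mgrow_down_mgrow_up:
  assumes "hstrips q y x" "hstrips p y t" "\<forall>j. \<not> (1 \<le> j \<and> j \<le> min p q) \<longrightarrow> e j = 0"
  shows "mgrow_down p q x t (mgrow_up p q x t y e) = y" "mgrow_excess p q x t (mgrow_up p q x t y e) = e"
proof -
  note x = hstripsD[OF assms(1)] and t = hstripsD[OF assms(2)]
  show "mgrow_down p q x t (mgrow_up p q x t y e) = y"
  proof
    show "mgrow_down p q x t (mgrow_up p q x t y e) j = y j" for j
      using x(2)[of j] t(2)[of j] grow_down_grow_up(1)[OF x(1) t(1), of j]
      unfolding mgrow_up_def mgrow_down_def by (cases j rule: component_cases[of _ p q]) auto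
  qed
  show "mgrow_excess p q x t (mgrow_up p q x t y e) = e"
  proof
    show "mgrow_excess p q x t (mgrow_up p q x t y e) j = e j" for j
      using assms(3) grow_down_grow_up(2)[OF x(1) t(1)] unfolding mgrow_up_def mgrow_excess_def by auto
  qed
qed

lemma mgrow_down_le:
  assumes "hstrips p x l" "hstrips q t l"
  shows "mgrow_down p q x t l j i \<le> l j i"
  using hstrips_le[OF hstrips_mgrow_down(1)[OF assms]] hstrips_le[OF assms(1)] le_trans by blast

lemma row_sum_mgrow_down:
  assumes "hstrips p x l" "hstrips q t l" "\<forall>i\<ge>N. l j i = 0"
  defines "y \<equiv> mgrow_down p q x t l" and "e \<equiv> mgrow_excess p q x t l"
  shows "(\<Sum>i<N. l j i) + (\<Sum>i<N. y j i) = (\<Sum>i<N. x j i) + (\<Sum>i<N. t j i) + e j"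
proof (cases "1 \<le> j \<and> j \<le> min p q")
  case True
  then have "hstrip (x j) (l j)" "hstrip (t j) (l j)"
    using assms(1,2) unfolding hstrips_def by auto
  moreover have "\<forall>i\<ge>N. x j i = 0 \<and> t j i = 0" "y j N = 0"
    using assms(3) hstrips_le[OF assms(1)] hstrips_le[OF assms(2)] mgrow_down_le[OF assms(1,2)]
    unfolding y_def by (metis le_zero_eq order_refl)+
  ultimately show ?thesis
    using grow_down_sum[of "x j" "l j" "t j" N] True assms(3)
    unfolding y_def e_def mgrow_down_def mgrow_excess_def by simp
next
  case False
  note x = hstripsD(2)[OF assms(1)] and t = hstripsD(2)[OF assms(2)]
  have "l j i + y j i = x j i + t j i" for i
    using False x[of j] t[of j] x[of 0] t[of 0] unfolding y_def mgrow_down_def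
    by (cases j rule: component_cases[of _ p q]) auto
  moreover have "e j = 0"
    using False unfolding e_def mgrow_excess_def by auto
  ultimately show ?thesis
    by (simp add: sum.distrib[symmetric])
qed

lemma msize_mgrow_down:
  assumes "hstrips p x l" "hstrips q t l" "fin_support l"
  defines "y \<equiv> mgrow_down p q x t l" and "e \<equiv> mgrow_excess p q x t l"
  shows "msize l + msize y = msize x + msize t + (\<Sum>j\<in>{1..min p q}. e j)"
proof -
  have le: "x j i \<le> l j i" "t j i \<le> l j i" "y j i \<le> l j i" for j i
    using hstrips_le[OF assms(1)] hstrips_le[OF assms(2)] mgrow_down_le[OF assms(1,2)] unfolding y_def by blast+
  obtain N0 where N0: "\<And>j i. l j i \<noteq> 0 \<Longrightarrow> j < N0 \<and> i < N0"
    using fin_support_bounded[OF assms(3)] by blast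
  define N where "N = max N0 (Suc (min p q))"
  have bound: "j < N \<and> i < N" if "g j i \<noteq> 0" "\<And>j i. g j i \<le> l j i" for g j i
    using N0[of j i] that unfolding N_def by (metis le_zero_eq less_max_iff_disj)
  have box: "msize g = (\<Sum>j<N. \<Sum>i<N. g j i)" if "\<And>j i. g j i \<le> l j i" for g
    using fin_support_le[OF assms(3) that] bound[OF _ that] by (rule msize_eq_box_sum)
  have "\<forall>i\<ge>N. l j i = 0" for j
    using bound[of l] by fastforce
  then have row: "(\<Sum>i<N. l j i) + (\<Sum>i<N. y j i) = (\<Sum>i<N. x j i) + (\<Sum>i<N. t j i) + e j" for j
    using row_sum_mgrow_down[OF assms(1,2)] unfolding y_def e_def by blast
  have "(\<Sum>j<N. e j) = (\<Sum>j\<in>{1..min p q}. e j)"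
    unfolding e_def mgrow_excess_def N_def by (intro sum.mono_neutral_right) auto
  moreover have "msize l + msize y = (\<Sum>j<N. (\<Sum>i<N. l j i) + (\<Sum>i<N. y j i))"
    using box[of l] box[of y] le by (simp add: sum.distrib)
  moreover have "msize x + msize t = (\<Sum>j<N. (\<Sum>i<N. x j i) + (\<Sum>i<N. t j i))"
    using box[of x] box[of t] le by (simp add: sum.distrib)
  ultimately show ?thesis
    using row by (simp add: sum.distrib)
qed

lemma mgrow_down_in_strip_meets:
  assumes "strip_step p b x l" "strip_step q a t l"
  defines "k \<equiv> \<Sum>j\<in>{1..min p q}. mgrow_excess p q x t l j"
  shows "k \<le> min a b" "mgrow_excess p q x t l \<in> wcomps (min p q) k"
    "mgrow_down p q x t l \<in> strip_meets p q b a x t k"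
proof -
  let ?y = "mgrow_down p q x t l"
  have hs: "hstrips p x l" "hstrips q t l" and fin: "fin_support x" "fin_support t" "fin_support l"
    and size: "msize l = msize x + b" "msize l = msize t + a"
    using assms(1,2) unfolding strip_step_def by auto
  have hy: "hstrips q ?y x" "hstrips p ?y t"
    using hstrips_mgrow_down[OF hs] by auto
  have "fin_support ?y"
    using fin_support_le[OF fin(1) hstrips_le[OF hy(1)]] .
  moreover have "msize ?y \<le> msize x" "msize ?y \<le> msize t"
    using msize_mono[OF fin(1) hstrips_le[OF hy(1)]] msize_mono[OF fin(2) hstrips_le[OF hy(2)]] .
  moreover have "msize l + msize ?y = msize x + msize t + k"
    using msize_mgrow_down[OF hs fin(3)] unfolding k_def .
  ultimately show "k \<le> min a b" "?y \<in> strip_meets p q b a x t k"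
    using hy fin size unfolding strip_meets_def strip_step_def by auto
  show "mgrow_excess p q x t l \<in> wcomps (min p q) k"
    unfolding wcomps_def k_def mgrow_excess_def by simp
qed

lemma mgrow_up_in_strip_joins:
  assumes "k \<le> min a b" "e \<in> wcomps (min p q) k" "y \<in> strip_meets p q b a x t k"
  shows "mgrow_up p q x t y e \<in> strip_joins p q b a x t"
proof -
  let ?l = "mgrow_up p q x t y e"
  have hy: "hstrips q y x" "hstrips p y t" and fin: "fin_support y" "fin_support x" "fin_support t"
    and size: "msize x = msize y + (a - k)" "msize t = msize y + (b - k)"
    using assms(3) unfolding strip_meets_def strip_step_def by auto
  have e: "\<forall>j. \<not> (1 \<le> j \<and> j \<le> min p q) \<longrightarrow> e j = 0"
    "(\<Sum>j\<in>{1..min p q}. e j) = k"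
    using assms(2) unfolding wcomps_def by auto
  have hl: "hstrips p x ?l" "hstrips q t ?l"
    using hstrips_mgrow_up[OF hy] by auto
  have fin_l: "fin_support ?l"
    using fin_support_hstrips_succ[OF fin(2) hl(1)] .
  moreover have "msize ?l + msize y = msize x + msize t + k"
    using msize_mgrow_down[OF hl fin_l] mgrow_down_mgrow_up[OF hy e(1)] e(2) by simp
  ultimately show ?thesis
    using assms(1) hl fin size unfolding strip_joins_def strip_step_def by auto
qed

lemma finite_wcomps: "finite (wcomps r k)"
proof -
  have "e \<in> {e. \<forall>j. (j \<in> {1..r} \<longrightarrow> e j \<in> {..k}) \<and> (j \<notin> {1..r} \<longrightarrow> e j = 0)}"
    if e: "e \<in> wcomps r k" for e
  proof -
    have "e j \<le> (\<Sum>j\<in>{1..r}. e j)" if "j \<in> {1..r}" for j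
      using that by (intro member_le_sum) auto
    then show ?thesis
      using e unfolding wcomps_def by auto
  qed
  then have "wcomps r k \<subseteq> {e. \<forall>j. (j \<in> {1..r} \<longrightarrow> e j \<in> {..k}) \<and> (j \<notin> {1..r} \<longrightarrow> e j = 0)}"
    by blast
  then show ?thesis
    by (rule finite_subset) (intro finite_set_of_finite_funs; simp)
qed

lemma finite_strip_meets:
  assumes "fin_support x"
  shows "finite (strip_meets p q b a x t k)"
proof -
  have "strip_meets p q b a x t k \<subseteq> {y. \<forall>j i. y j i \<le> x j i}"
    unfolding strip_meets_def using strip_step_le by blast
  then show ?thesis
    using finite_pointwise_le[OF assms] by (rule finite_subset)
qed

lemma strip_joins_bij:
  "bij_betw (\<lambda>l. (mgrow_excess p q x t l, mgrow_down p q x t l)) (strip_joins p q b a x t)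
    (\<Union>k\<in>{..min a b}. wcomps (min p q) k \<times> strip_meets p q b a x t k)"
  (is "bij_betw ?f _ ?M")
proof (rule bij_betw_byWitness[where f'="\<lambda>(e, y). mgrow_up p q x t y e"])
  show "\<forall>l\<in>strip_joins p q b a x t. (\<lambda>(e, y). mgrow_up p q x t y e) (?f l) = l"
  proof
    fix l
    assume "l \<in> strip_joins p q b a x t"
    then have "hstrips p x l" "hstrips q t l"
      unfolding strip_joins_def strip_step_def by auto
    then show "(\<lambda>(e, y). mgrow_up p q x t y e) (?f l) = l"
      by (simp add: mgrow_up_mgrow_down)
  qed
  show "\<forall>z\<in>?M. ?f ((\<lambda>(e, y). mgrow_up p q x t y e) z) = z"
  proof
    fix z
    assume "z \<in> ?M"
    then obtain k e y where z: "z = (e, y)" "e \<in> wcomps (min p q) k" "y \<in> strip_meets p q b a x t k"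
      by blast
    then have "hstrips q y x" "hstrips p y t" "\<forall>j. \<not> (1 \<le> j \<and> j \<le> min p q) \<longrightarrow> e j = 0"
      unfolding strip_meets_def strip_step_def wcomps_def by auto
    then show "?f ((\<lambda>(e, y). mgrow_up p q x t y e) z) = z"
      using mgrow_down_mgrow_up z(1) by simp
  qed
  show "?f ` strip_joins p q b a x t \<subseteq> ?M"
  proof (rule image_subsetI)
    fix l
    assume "l \<in> strip_joins p q b a x t"
    then have "strip_step p b x l" "strip_step q a t l"
      unfolding strip_joins_def by auto
    from mgrow_down_in_strip_meets[OF this] show "?f l \<in> ?M"
      by blast
  qed
  show "(\<lambda>(e, y). mgrow_up p q x t y e) ` ?M \<subseteq> strip_joins p q b a x t"
    using mgrow_up_in_strip_joins by fastforce
qed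

lemma card_strip_joins:
  assumes "fin_support x"
  shows "card (strip_joins p q b a x t) =
    (\<Sum>k\<le>min a b. card (wcomps (min p q) k) * card (strip_meets p q b a x t k))"
proof -
  have "card (strip_joins p q b a x t) = card (\<Union>k\<in>{..min a b}. wcomps (min p q) k \<times> strip_meets p q b a x t k)"
    using strip_joins_bij by (rule bij_betw_same_card)
  also have "\<dots> = (\<Sum>k\<le>min a b. card (wcomps (min p q) k \<times> strip_meets p q b a x t k))"
  proof (rule card_UN_disjoint)
    show "\<forall>k\<in>{..min a b}. finite (wcomps (min p q) k \<times> strip_meets p q b a x t k)"
      using finite_wcomps finite_strip_meets[OF assms] by blast
  qed (auto simp: wcomps_def)
  also have "\<dots> = (\<Sum>k\<le>min a b. card (wcomps (min p q) k) * card (strip_meets p q b a x t k))"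
    by (simp add: card_cartesian_product)
  finally show ?thesis .
qed

section \<open>Counting walks\<close>

datatype step = Up nat nat | Down nat nat

fun step_rel :: "step \<Rightarrow> mshape \<Rightarrow> mshape \<Rightarrow> bool" where
  "step_rel (Up p b) x y = strip_step p b x y"
| "step_rel (Down q a) x y = strip_step q a y x"

lemma step_rel_Up [simp]: "step_rel (Up p b) x = strip_step p b x"
  by (rule ext) simp

lemma step_rel_Down [simp]: "step_rel (Down q a) x = (\<lambda>y. strip_step q a y x)"
  by (rule ext) simp

fun walks :: "mshape \<Rightarrow> step list \<Rightarrow> mshape \<Rightarrow> nat" where
  "walks x [] z = (if x = z then 1 else 0)"
| "walks x (s # ss) z = (\<Sum>y\<in>{y. step_rel s x y}. walks y ss z)"

lemma finite_step_rel: "finite {y. step_rel st x y}"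
  by (cases st) (simp_all add: finite_strip_succs finite_strip_preds)

lemma finite_step_rel_preds: "finite {z. step_rel st z w}"
  by (cases st) (simp_all add: finite_strip_succs finite_strip_preds)

lemma finite_walk_ends: "finite {z. walks x ss z \<noteq> 0}"
proof (induction ss arbitrary: x)
  case Nil
  have "{z. walks x [] z \<noteq> 0} \<subseteq> {x}"
    by auto
  then show ?case
    using finite_subset by blast
next
  case (Cons st ss)
  have "{z. walks x (st # ss) z \<noteq> 0} \<subseteq>
      (\<Union>y\<in>{y. step_rel st x y}. {z. walks y ss z \<noteq> 0})"
  proof
    fix z
    assume "z \<in> {z. walks x (st # ss) z \<noteq> 0}"
    then have "(\<Sum>y\<in>{y. step_rel st x y}. walks y ss z) \<noteq> 0"
      by simp
    then obtain y where "y \<in> {y. step_rel st x y}" "walks y ss z \<noteq> 0"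
      by (rule sum.not_neutral_contains_not_neutral)
    then show "z \<in> (\<Union>y\<in>{y. step_rel st x y}. {z. walks y ss z \<noteq> 0})"
      by blast
  qed
  moreover have "finite (\<Union>y\<in>{y. step_rel st x y}. {z. walks y ss z \<noteq> 0})"
    using finite_step_rel Cons.IH by blast
  ultimately show ?case
    by (rule finite_subset)
qed

lemma walks_mpartition:
  assumes "walks x ss z \<noteq> 0" "is_mpartition x" "fin_support x"
  shows "is_mpartition z \<and> fin_support z"
  using assms
proof (induction ss arbitrary: x)
  case (Cons st ss)
  have "(\<Sum>y\<in>{y. step_rel st x y}. walks y ss z) \<noteq> 0"
    using Cons.prems(1) by simp
  then obtain y where y: "step_rel st x y" "walks y ss z \<noteq> 0"
    by (rule sum.not_neutral_contains_not_neutral) simp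
  have "is_mpartition y \<and> fin_support y"
  proof (cases st)
    case (Up p b)
    then show ?thesis
      using y(1) is_mpartition_strip_step[of p b x y] strip_step_fin_support[of p b x y] Cons.prems(2) by simp
  next
    case (Down q a)
    then show ?thesis
      using y(1) is_mpartition_strip_step[of q a y x] strip_step_fin_support[of q a y x] Cons.prems(2) by simp
  qed
  with y(2) show ?case
    using Cons.IH by blast
qed (simp split: if_splits)

lemma walks_append:
  assumes "finite T" "\<forall>z. walks x ss z \<noteq> 0 \<longrightarrow> z \<in> T"
  shows "walks x (ss @ ts) w = (\<Sum>z\<in>T. walks x ss z * walks z ts w)"
  using assms
proof (induction ss arbitrary: x)
  case Nil
  then have "x \<in> T"
    by simp
  have "(\<Sum>z\<in>T. walks x [] z * walks z ts w) = (\<Sum>z\<in>T. if x = z then walks z ts w else 0)"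
    by (intro sum.cong) auto
  also have "\<dots> = walks x ts w"
    using \<open>x \<in> T\<close> Nil.prems(1) by (simp add: sum.delta)
  finally show ?case
    by simp
next
  case (Cons st ss)
  let ?S = "{y. step_rel st x y}"
  have fin_S: "finite ?S"
    by (rule finite_step_rel)
  have "walks x ((st # ss) @ ts) w = (\<Sum>y\<in>?S. walks y (ss @ ts) w)"
    by simp
  also have "\<dots> = (\<Sum>y\<in>?S. \<Sum>z\<in>T. walks y ss z * walks z ts w)"
  proof (rule sum.cong[OF refl])
    fix y
    assume y: "y \<in> ?S"
    have "\<forall>z. walks y ss z \<noteq> 0 \<longrightarrow> z \<in> T"
    proof (intro allI impI)
      fix z
      assume "walks y ss z \<noteq> 0"
      moreover have "walks y ss z \<le> (\<Sum>y\<in>?S. walks y ss z)"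
        using y fin_S by (intro member_le_sum) auto
      ultimately have "walks x (st # ss) z \<noteq> 0"
        by simp
      then show "z \<in> T"
        using Cons.prems(2) by blast
    qed
    then show "walks y (ss @ ts) w = (\<Sum>z\<in>T. walks y ss z * walks z ts w)"
      using Cons.IH Cons.prems(1) by blast
  qed
  also have "\<dots> = (\<Sum>z\<in>T. \<Sum>y\<in>?S. walks y ss z * walks z ts w)"
    by (rule sum.swap)
  also have "\<dots> = (\<Sum>z\<in>T. walks x (st # ss) z * walks z ts w)"
    by (simp add: sum_distrib_right)
  finally show ?case .
qed

lemma walks_snoc: "walks x (ss @ [st]) w = (\<Sum>z\<in>{z. step_rel st z w}. walks x ss z)"
proof -
  let ?P = "{z. step_rel st z w}"
  define T where "T = {z. walks x ss z \<noteq> 0} \<union> ?P"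
  have fin: "finite T"
    unfolding T_def using finite_walk_ends finite_step_rel_preds by blast
  have one: "walks z [st] w = (if z \<in> ?P then 1 else 0)" for z
    using finite_step_rel[of st z] by (simp add: sum.delta')
  have "walks x (ss @ [st]) w = (\<Sum>z\<in>T. walks x ss z * walks z [st] w)"
    by (rule walks_append[OF fin]) (auto simp: T_def)
  also have "\<dots> = (\<Sum>z\<in>T. if z \<in> ?P then walks x ss z else 0)"
    by (intro sum.cong refl) (simp only: one, simp)
  also have "\<dots> = (\<Sum>z\<in>?P. walks x ss z)"
    using fin by (simp add: sum.If_cases Int_absorb1 T_def)
  finally show ?thesis .
qed

lemma sum_sum_swap_card:
  assumes "finite A" "finite T" "\<forall>x\<in>A. B x \<subseteq> T"
  shows "(\<Sum>x\<in>A. \<Sum>y\<in>B x. (f y :: nat)) = (\<Sum>y\<in>T. card {x\<in>A. y \<in> B x} * f y)"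
proof -
  have "(\<Sum>x\<in>A. \<Sum>y\<in>B x. f y) = (\<Sum>x\<in>A. \<Sum>y\<in>T. if y \<in> B x then f y else 0)"
  proof (rule sum.cong[OF refl])
    fix x
    assume "x \<in> A"
    then have "B x \<subseteq> T"
      using assms(3) by blast
    then show "(\<Sum>y\<in>B x. f y) = (\<Sum>y\<in>T. if y \<in> B x then f y else 0)"
      using assms(2) by (simp add: sum.If_cases Int_absorb1)
  qed
  also have "\<dots> = (\<Sum>y\<in>T. \<Sum>x\<in>A. if y \<in> B x then f y else 0)"
    by (rule sum.swap)
  also have "\<dots> = (\<Sum>y\<in>T. card {x\<in>A. y \<in> B x} * f y)"
  proof (rule sum.cong[OF refl])
    fix y
    have "(\<Sum>x\<in>A. if y \<in> B x then f y else 0) = (\<Sum>x\<in>{x\<in>A. y \<in> B x}. f y)"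
      by (rule sum.inter_filter[OF assms(1), symmetric])
    then show "(\<Sum>x\<in>A. if y \<in> B x then f y else 0) = card {x\<in>A. y \<in> B x} * f y"
      by simp
  qed
  finally show ?thesis .
qed

text \<open>Grouping the two-step walks by their endpoint reduces this to \<open>card_strip_joins\<close>.\<close>

lemma walks_Up_Down:
  "walks x (Up p b # Down q a # rest) w =
     (\<Sum>k\<le>min a b. card (wcomps (min p q) k) * walks x (Down q (a - k) # Up p (b - k) # rest) w)"
proof (cases "fin_support x")
  case False
  then have e: "Collect (strip_step p b x) = {}" "\<And>k. {y. strip_step q (a - k) y x} = {}"
    unfolding strip_step_def by auto
  show ?thesis
    by (simp only: walks.simps step_rel_Up step_rel_Down e sum.empty mult_0_right sum.neutral_const)
next
  case True
  let ?f = "\<lambda>t. walks t rest w"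
  let ?S1 = "{l. strip_step p b x l}"
  let ?P = "\<lambda>l. {t. strip_step q a t l}"
  let ?Pk = "\<lambda>k. {y. strip_step q (a - k) y x}"
  let ?Sk = "\<lambda>k y. {t. strip_step p (b - k) y t}"
  define T where "T = (\<Union>l\<in>?S1. ?P l) \<union> (\<Union>k\<in>{..min a b}. \<Union>y\<in>?Pk k. ?Sk k y)"
  have fin_T: "finite T"
    unfolding T_def by (intro finite_UnI finite_UN_I finite_atMost finite_strip_preds finite_strip_succs)
  have "walks x (Up p b # Down q a # rest) w = (\<Sum>l\<in>?S1. \<Sum>t\<in>?P l. ?f t)"
    by simp
  also have "\<dots> = (\<Sum>t\<in>T. card {l\<in>?S1. t \<in> ?P l} * ?f t)"
    by (rule sum_sum_swap_card[OF finite_strip_succs fin_T]) (auto simp: T_def)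
  also have "\<dots> = (\<Sum>t\<in>T. card (strip_joins p q b a x t) * ?f t)"
    unfolding strip_joins_def by simp
  also have "\<dots> = (\<Sum>t\<in>T. (\<Sum>k\<le>min a b. card (wcomps (min p q) k) * card (strip_meets p q b a x t k)) * ?f t)"
    using card_strip_joins[OF True] by simp
  also have "\<dots> = (\<Sum>k\<le>min a b. card (wcomps (min p q) k) * (\<Sum>t\<in>T. card (strip_meets p q b a x t k) * ?f t))"
    by (simp add: sum_distrib_right sum_distrib_left mult.assoc sum.swap[of _ T])
  also have "\<dots> = (\<Sum>k\<le>min a b. card (wcomps (min p q) k) * (\<Sum>y\<in>?Pk k. \<Sum>t\<in>?Sk k y. ?f t))"
  proof (rule sum.cong[OF refl])
    fix k
    assume k: "k \<in> {..min a b}"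
    have "(\<Sum>y\<in>?Pk k. \<Sum>t\<in>?Sk k y. ?f t) =
        (\<Sum>t\<in>T. card {y\<in>?Pk k. t \<in> ?Sk k y} * ?f t)"
      by (rule sum_sum_swap_card[OF finite_strip_preds fin_T]) (use k in \<open>auto simp: T_def\<close>)
    also have "\<dots> = (\<Sum>t\<in>T. card (strip_meets p q b a x t k) * ?f t)"
      unfolding strip_meets_def by simp
    finally show "card (wcomps (min p q) k) * (\<Sum>t\<in>T. card (strip_meets p q b a x t k) * ?f t) =
        card (wcomps (min p q) k) * (\<Sum>y\<in>?Pk k. \<Sum>t\<in>?Sk k y. ?f t)"
      by simp
  qed
  also have "\<dots> = (\<Sum>k\<le>min a b. card (wcomps (min p q) k) * walks x (Down q (a - k) # Up p (b - k) # rest) w)"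
    by simp
  finally show ?thesis .
qed

section \<open>Walks through up steps followed by down steps\<close>

definition up_word :: "('c \<Rightarrow> nat) \<Rightarrow> ('c \<Rightarrow> nat) \<Rightarrow> 'c list \<Rightarrow> step list" where
  "up_word lv cs X = map (\<lambda>c. Up (lv c) (cs c)) X"

definition bounded_vecs :: "'c list \<Rightarrow> ('c \<Rightarrow> nat) \<Rightarrow> nat \<Rightarrow> ('c \<Rightarrow> nat) set" where
  "bounded_vecs X cs a = {v. (\<forall>c. c \<notin> set X \<longrightarrow> v c = 0) \<and> (\<forall>c. v c \<le> cs c) \<and> (\<Sum>c\<in>set X. v c) \<le> a}"

definition vec_weight :: "('c \<Rightarrow> nat) \<Rightarrow> nat \<Rightarrow> 'c list \<Rightarrow> ('c \<Rightarrow> nat) \<Rightarrow> nat" where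
  "vec_weight lv q X v = (\<Prod>c\<in>set X. card (wcomps (min (lv c) q) (v c)))"

lemma finite_bounded_vecs: "finite (bounded_vecs X cs a)"
proof -
  have "v \<in> {f. \<forall>c. (c \<in> set X \<longrightarrow> f c \<in> {..a}) \<and> (c \<notin> set X \<longrightarrow> f c = 0)}"
    if v: "v \<in> bounded_vecs X cs a" for v
  proof -
    have "v c \<le> (\<Sum>c\<in>set X. v c)" if "c \<in> set X" for c
      using that by (intro member_le_sum) auto
    then show ?thesis
      using v unfolding bounded_vecs_def by fastforce
  qed
  then have "bounded_vecs X cs a \<subseteq>
      {f. \<forall>c. (c \<in> set X \<longrightarrow> f c \<in> {..a}) \<and> (c \<notin> set X \<longrightarrow> f c = 0)}"
    by blast
  then show ?thesis
    by (rule finite_subset) (intro finite_set_of_finite_funs; simp)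
qed

lemma bounded_vecs_Cons_bij:
  assumes "c \<notin> set X"
  shows "bij_betw (\<lambda>(v, k). v(c := k))
    (SIGMA v:bounded_vecs X cs a. {..min (a - (\<Sum>c\<in>set X. v c)) (cs c)}) (bounded_vecs (c # X) cs a)"
proof (rule bij_betw_byWitness[where f'="\<lambda>v. (v(c := 0), v c)"])
  have sum_upd: "(\<Sum>c'\<in>set X. (v(c := k)) c') = (\<Sum>c'\<in>set X. v c')" for v :: "'a \<Rightarrow> nat" and k
    using assms by (intro sum.cong) auto
  show "\<forall>z\<in>SIGMA v:bounded_vecs X cs a. {..min (a - (\<Sum>c\<in>set X. v c)) (cs c)}.
      (\<lambda>v. (v(c := 0), v c)) ((\<lambda>(v, k). v(c := k)) z) = z"
    using assms unfolding bounded_vecs_def by auto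
  show "(\<lambda>(v, k). v(c := k)) ` (SIGMA v:bounded_vecs X cs a. {..min (a - (\<Sum>c\<in>set X. v c)) (cs c)})
      \<subseteq> bounded_vecs (c # X) cs a"
    using assms sum_upd unfolding bounded_vecs_def by auto
  show "(\<lambda>v. (v(c := 0), v c)) ` bounded_vecs (c # X) cs a
      \<subseteq> (SIGMA v:bounded_vecs X cs a. {..min (a - (\<Sum>c\<in>set X. v c)) (cs c)})"
    using assms sum_upd unfolding bounded_vecs_def by auto
qed auto

lemma sum_fun_upd_Cons:
  assumes "c \<notin> set X"
  shows "(\<Sum>c'\<in>set (c # X). (v(c := k)) c') = k + (\<Sum>c'\<in>set X. v c')"
proof -
  have "(\<Sum>c'\<in>set X. (v(c := k)) c') = (\<Sum>c'\<in>set X. v c')"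
    using assms by (intro sum.cong) auto
  then show ?thesis
    using assms by simp
qed

lemma vec_weight_fun_upd_Cons:
  assumes "c \<notin> set X"
  shows "vec_weight lv q (c # X) (v(c := k)) = card (wcomps (min (lv c) q) k) * vec_weight lv q X v"
proof -
  have "(\<Prod>c'\<in>set X. card (wcomps (min (lv c') q) ((v(c := k)) c'))) =
      (\<Prod>c'\<in>set X. card (wcomps (min (lv c') q) (v c')))"
    using assms by (intro prod.cong) auto
  then show ?thesis
    unfolding vec_weight_def using assms by simp
qed

lemma up_word_fun_upd_Cons:
  assumes "c \<notin> set X"
  shows "up_word lv (\<lambda>c'. cs c' - (v(c := k)) c') (c # X) =
      Up (lv c) (cs c - k) # up_word lv (\<lambda>c. cs c - v c) X"
  unfolding up_word_def using assms by auto

text \<open>Moving a down step to the front through the up steps for the letters of \<open>X\<close>: by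
  \<open>walks_Up_Down\<close> each passage through the step of a letter \<open>c\<close> removes some \<open>v c\<close> cells
  from both steps; \<open>v\<close> will become a row of the matrix.\<close>

lemma walks_up_word_Down:
  assumes "distinct X"
  shows "walks x (up_word lv cs X @ Down q a # rest) w =
    (\<Sum>v\<in>bounded_vecs X cs a. vec_weight lv q X v * walks x (Down q (a - (\<Sum>c\<in>set X. v c)) # up_word lv (\<lambda>c. cs c - v c) X @ rest) w)"
  using assms
proof (induction X arbitrary: x)
  case Nil
  have "bounded_vecs [] cs a = {\<lambda>_. 0}"
    unfolding bounded_vecs_def by auto
  then show ?case
    by (simp add: up_word_def vec_weight_def)
next
  case (Cons c X)
  have cX: "c \<notin> set X" and dX: "distinct X"
    using Cons.prems by auto
  let ?S = "{y. strip_step (lv c) (cs c) x y}"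
  let ?R = "\<lambda>v'. up_word lv (\<lambda>c. cs c - v' c) X @ rest"
  let ?F = "\<lambda>v' k. vec_weight lv q X v' * (card (wcomps (min (lv c) q) k) * walks x (Down q (a - (\<Sum>c\<in>set X. v' c) - k) # Up (lv c) (cs c - k) # ?R v') w)"
  have "walks x (up_word lv cs (c # X) @ Down q a # rest) w =
      (\<Sum>y\<in>?S. walks y (up_word lv cs X @ Down q a # rest) w)"
    by (simp add: up_word_def)
  also have "\<dots> = (\<Sum>y\<in>?S. \<Sum>v'\<in>bounded_vecs X cs a. vec_weight lv q X v' * walks y (Down q (a - (\<Sum>c\<in>set X. v' c)) # ?R v') w)"
    using Cons.IH[OF dX] by simp
  also have "\<dots> = (\<Sum>v'\<in>bounded_vecs X cs a. vec_weight lv q X v' * (\<Sum>y\<in>?S. walks y (Down q (a - (\<Sum>c\<in>set X. v' c)) # ?R v') w))"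
    by (simp add: sum.swap[of _ ?S] sum_distrib_left)
  also have "\<dots> = (\<Sum>v'\<in>bounded_vecs X cs a. vec_weight lv q X v' * walks x (Up (lv c) (cs c) # Down q (a - (\<Sum>c\<in>set X. v' c)) # ?R v') w)"
    by simp
  also have "\<dots> = (\<Sum>v'\<in>bounded_vecs X cs a. \<Sum>k\<le>min (a - (\<Sum>c\<in>set X. v' c)) (cs c). ?F v' k)"
    by (simp only: walks_Up_Down sum_distrib_left)
  also have "\<dots> = (\<Sum>z\<in>(SIGMA v':bounded_vecs X cs a. {..min (a - (\<Sum>c\<in>set X. v' c)) (cs c)}). case_prod ?F z)"
    by (rule sum.Sigma) (auto simp: finite_bounded_vecs)
  also have "\<dots> = (\<Sum>z\<in>(SIGMA v':bounded_vecs X cs a. {..min (a - (\<Sum>c\<in>set X. v' c)) (cs c)}).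
      (\<lambda>v. vec_weight lv q (c # X) v * walks x (Down q (a - (\<Sum>c\<in>set (c # X). v c)) # up_word lv (\<lambda>c. cs c - v c) (c # X) @ rest) w)
        ((\<lambda>(v', k). v'(c := k)) z))"
  proof (rule sum.cong[OF refl], clarify)
    fix v' k
    show "?F v' k = vec_weight lv q (c # X) (v'(c := k)) *
        walks x (Down q (a - (\<Sum>c'\<in>set (c # X). (v'(c := k)) c')) # up_word lv (\<lambda>c'. cs c' - (v'(c := k)) c') (c # X) @ rest) w"
      unfolding sum_fun_upd_Cons[OF cX] vec_weight_fun_upd_Cons[OF cX] up_word_fun_upd_Cons[OF cX]
      by (simp add: diff_diff_add ac_simps del: walks.simps)
  qed
  also have "\<dots> = (\<Sum>v\<in>bounded_vecs (c # X) cs a. vec_weight lv q (c # X) v * walks x (Down q (a - (\<Sum>c\<in>set (c # X). v c)) # up_word lv (\<lambda>c. cs c - v c) (c # X) @ rest) w)"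
    by (rule sum.reindex_bij_betw[OF bounded_vecs_Cons_bij[OF cX]])
  finally show ?case .
qed

lemma walks_mempty_Down: "walks mempty (Down q a # rest) w = (if a = 0 then walks mempty rest w else 0)"
proof -
  have "{y. strip_step q a y mempty} = (if a = 0 then {mempty} else {})"
    using strip_step_into_mempty by auto
  then show ?thesis
    by simp
qed

lemma walks_up_word_to_mempty: "walks x (up_word lv cs X) mempty = (if x = mempty \<and> (\<forall>c\<in>set X. cs c = 0) then 1 else 0)"
proof (induction X arbitrary: x)
  case Nil
  then show ?case
    by (simp add: up_word_def)
next
  case (Cons c X)
  have "walks x (up_word lv cs (c # X)) mempty =
      (\<Sum>y\<in>{y. strip_step (lv c) (cs c) x y}. if y = mempty \<and> (\<forall>c\<in>set X. cs c = 0) then 1 else 0)"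
    using Cons.IH by (simp add: up_word_def)
  also have "\<dots> = (if x = mempty \<and> (\<forall>c\<in>set (c # X). cs c = 0) then 1 else 0)"
  proof (cases "\<forall>c\<in>set X. cs c = 0")
    case True
    have "(\<Sum>y\<in>{y. strip_step (lv c) (cs c) x y}. if y = mempty \<and> (\<forall>c\<in>set X. cs c = 0) then 1 else 0) =
        (\<Sum>y\<in>{y. strip_step (lv c) (cs c) x y}. if y = mempty then 1 else 0)"
      using True by simp
    also have "\<dots> = (if mempty \<in> {y. strip_step (lv c) (cs c) x y} then 1 else 0)"
      using finite_strip_succs[of "lv c" "cs c" x] by (simp add: sum.delta')
    also have "\<dots> = (if x = mempty \<and> (\<forall>c\<in>set (c # X). cs c = 0) then 1 else 0)"
      using strip_step_into_mempty[of "lv c" "cs c" x] True by auto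
    finally show ?thesis .
  next
    case False
    then have "(\<forall>c\<in>set X. cs c = 0) \<longleftrightarrow> False" "(\<forall>c\<in>set (c # X). cs c = 0) \<longleftrightarrow> False"
      by auto
    then show ?thesis
      by (simp only: simp_thms if_False sum.neutral_const)
  qed
  finally show ?case .
qed

definition row_vecs :: "'c list \<Rightarrow> ('c \<Rightarrow> nat) \<Rightarrow> nat \<Rightarrow> ('c \<Rightarrow> nat) set" where
  "row_vecs X cs a = {v \<in> bounded_vecs X cs a. (\<Sum>c\<in>set X. v c) = a}"

text \<open>A weighted count of the matrices with columns \<open>X\<close>, column sums \<open>cs\<close> and rows described by
  \<open>Y\<close> (level and row sum of each row); an entry \<open>v c\<close> in a row of level \<open>q\<close> has weight the number
  of weak compositions of \<open>v c\<close> into \<open>min (lv c) q\<close> parts.\<close>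

fun mat_count :: "('c \<Rightarrow> nat) \<Rightarrow> 'c list \<Rightarrow> ('c \<Rightarrow> nat) \<Rightarrow> (nat \<times> nat) list \<Rightarrow> nat" where
  "mat_count lv X cs [] = (if \<forall>c\<in>set X. cs c = 0 then 1 else 0)"
| "mat_count lv X cs (qa # Y) = (\<Sum>v\<in>row_vecs X cs (snd qa).
      vec_weight lv (fst qa) X v * mat_count lv X (\<lambda>c. cs c - v c) Y)"

definition down_word :: "(nat \<times> nat) list \<Rightarrow> step list" where
  "down_word Y = map (\<lambda>qa. Down (fst qa) (snd qa)) Y"

lemma walks_up_down_word:
  assumes "distinct X"
  shows "walks mempty (up_word lv cs X @ down_word Y) mempty = mat_count lv X cs Y"
proof (induction Y arbitrary: cs)
  case Nil
  then show ?case
    by (simp add: down_word_def walks_up_word_to_mempty)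
next
  case (Cons qa Y)
  obtain q a where qa: "qa = (q, a)"
    by (cases qa)
  have "walks mempty (up_word lv cs X @ down_word (qa # Y)) mempty =
      walks mempty (up_word lv cs X @ Down q a # down_word Y) mempty"
    by (simp add: down_word_def qa)
  also have "\<dots> = (\<Sum>v\<in>bounded_vecs X cs a. vec_weight lv q X v * walks mempty (Down q (a - (\<Sum>c\<in>set X. v c)) # up_word lv (\<lambda>c. cs c - v c) X @ down_word Y) mempty)"
    by (rule walks_up_word_Down[OF assms])
  also have "\<dots> = (\<Sum>v\<in>bounded_vecs X cs a. if (\<Sum>c\<in>set X. v c) = a then vec_weight lv q X v * mat_count lv X (\<lambda>c. cs c - v c) Y else 0)"
  proof (rule sum.cong[OF refl])
    fix v
    assume "v \<in> bounded_vecs X cs a"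
    then have le: "(\<Sum>c\<in>set X. v c) \<le> a"
      unfolding bounded_vecs_def by simp
    show "vec_weight lv q X v * walks mempty (Down q (a - (\<Sum>c\<in>set X. v c)) # up_word lv (\<lambda>c. cs c - v c) X @ down_word Y) mempty =
      (if (\<Sum>c\<in>set X. v c) = a then vec_weight lv q X v * mat_count lv X (\<lambda>c. cs c - v c) Y else 0)"
      using le Cons.IH[of "\<lambda>c. cs c - v c"] by (simp del: walks.simps add: walks_mempty_Down)
  qed
  also have "\<dots> = (\<Sum>v\<in>{v\<in>bounded_vecs X cs a. (\<Sum>c\<in>set X. v c) = a}. vec_weight lv q X v * mat_count lv X (\<lambda>c. cs c - v c) Y)"
    by (rule sum.inter_filter[OF finite_bounded_vecs, symmetric])
  also have "\<dots> = mat_count lv X cs (qa # Y)"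
    by (simp add: qa row_vecs_def)
  finally show ?case .
qed

section \<open>Weak compositions and partitions in a box\<close>

definition bounded_parts :: "nat \<Rightarrow> nat \<Rightarrow> nat list set" where
  "bounded_parts n a = {eta. is_partition eta \<and> (\<forall>x\<in>set eta. x \<le> a) \<and> length eta \<le> n}"

lemma is_partition_Cons: "is_partition (t # eta) \<longleftrightarrow> 0 < t \<and> (\<forall>x\<in>set eta. x \<le> t) \<and> is_partition eta"
  unfolding is_partition_def by auto

lemma bounded_parts_0: "bounded_parts 0 a = {[]}"
  unfolding bounded_parts_def is_partition_def by auto

lemma bounded_parts_bound_0: "bounded_parts n 0 = {[]}"
proof (intro set_eqI iffI)
  fix eta
  assume "eta \<in> bounded_parts n 0"
  then show "eta \<in> {[]}"
    unfolding bounded_parts_def is_partition_def by (cases eta) auto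
qed (simp add: bounded_parts_def is_partition_def)

lemma finite_bounded_parts: "finite (bounded_parts n a)"
proof -
  have "bounded_parts n a \<subseteq> {xs. set xs \<subseteq> {..a} \<and> length xs \<le> n}"
    unfolding bounded_parts_def by auto
  then show ?thesis
    by (rule finite_subset) (rule finite_lists_length_le; simp)
qed

lemma bounded_parts_Suc: "bounded_parts (Suc n) k = insert [] (\<Union>t\<in>{1..k}. (Cons t) ` bounded_parts n t)"
proof (intro set_eqI iffI)
  fix eta
  assume eta: "eta \<in> bounded_parts (Suc n) k"
  show "eta \<in> insert [] (\<Union>t\<in>{1..k}. (Cons t) ` bounded_parts n t)"
  proof (cases eta)
    case (Cons t eta')
    with eta have "eta' \<in> bounded_parts n t" "t \<in> {1..k}"
      by (auto simp: bounded_parts_def is_partition_Cons)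
    then show ?thesis
      using Cons by blast
  qed simp
next
  fix eta
  assume "eta \<in> insert [] (\<Union>t\<in>{1..k}. (Cons t) ` bounded_parts n t)"
  then show "eta \<in> bounded_parts (Suc n) k"
    by (auto simp: bounded_parts_def is_partition_Cons) (auto simp: is_partition_def)
qed

lemma card_bounded_parts_Suc: "card (bounded_parts (Suc n) k) = (\<Sum>t\<le>k. card (bounded_parts n t))"
proof -
  have "card (bounded_parts (Suc n) k) = Suc (card (\<Union>t\<in>{1..k}. (Cons t) ` bounded_parts n t))"
    unfolding bounded_parts_Suc by (subst card_insert_disjoint) (auto simp: finite_bounded_parts)
  also have "card (\<Union>t\<in>{1..k}. (Cons t) ` bounded_parts n t) =
      (\<Sum>t\<in>{1..k}. card ((Cons t) ` bounded_parts n t))"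
    by (rule card_UN_disjoint) (auto simp: finite_bounded_parts)
  also have "\<dots> = (\<Sum>t\<in>{1..k}. card (bounded_parts n t))"
    by (intro sum.cong refl card_image) (auto simp: inj_on_def)
  finally show ?thesis
    by (simp add: atMost_atLeast0 sum.atLeast_Suc_atMost bounded_parts_bound_0)
qed

lemma wcomps_1: "wcomps 1 k = {(\<lambda>_. 0)(1 := k)}"
proof (intro set_eqI iffI)
  fix e
  assume "e \<in> wcomps 1 k"
  then have "\<forall>j. j \<noteq> 1 \<longrightarrow> e j = 0" "e 1 = k"
    unfolding wcomps_def by auto
  then show "e \<in> {(\<lambda>_. 0)(1 := k)}"
    by (auto intro!: ext)
qed (auto simp: wcomps_def)

lemma wcomps_Suc_bij:
  "bij_betw (\<lambda>e. e(Suc r := 0)) (wcomps (Suc r) k) (\<Union>k'\<in>{..k}. wcomps r k')"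
proof (rule bij_betw_byWitness[where f'="\<lambda>e. e(Suc r := k - (\<Sum>j\<in>{1..r}. e j))"])
  have sum_upd: "(\<Sum>j\<in>{1..r}. (e(Suc r := n)) j) = (\<Sum>j\<in>{1..r}. e j)" for e :: "nat \<Rightarrow> nat" and n
    by (intro sum.cong) auto
  have sum_Suc: "(\<Sum>j\<in>{1..Suc r}. e j) = (\<Sum>j\<in>{1..r}. e j) + e (Suc r)" for e :: "nat \<Rightarrow> nat"
    by simp
  show "\<forall>e\<in>wcomps (Suc r) k. (e(Suc r := 0))(Suc r := k - (\<Sum>j\<in>{1..r}. (e(Suc r := 0)) j)) = e"
    unfolding wcomps_def using sum_upd sum_Suc by (auto intro!: ext)
  show "\<forall>e\<in>(\<Union>k'\<in>{..k}. wcomps r k').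
      (e(Suc r := k - (\<Sum>j\<in>{1..r}. e j)))(Suc r := 0) = e"
    unfolding wcomps_def by (auto intro!: ext)
  show "(\<lambda>e. e(Suc r := 0)) ` wcomps (Suc r) k \<subseteq> (\<Union>k'\<in>{..k}. wcomps r k')"
    unfolding wcomps_def using sum_upd sum_Suc by fastforce
  show "(\<lambda>e. e(Suc r := k - (\<Sum>j\<in>{1..r}. e j))) ` (\<Union>k'\<in>{..k}. wcomps r k') \<subseteq>
      wcomps (Suc r) k"
    unfolding wcomps_def using sum_upd sum_Suc by auto
qed

lemma card_wcomps_Suc: "card (wcomps (Suc r) k) = (\<Sum>k'\<le>k. card (wcomps r k'))"
proof -
  have "card (wcomps (Suc r) k) = card (\<Union>k'\<in>{..k}. wcomps r k')"
    using wcomps_Suc_bij by (rule bij_betw_same_card)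
  also have "\<dots> = (\<Sum>k'\<le>k. card (wcomps r k'))"
    using finite_wcomps by (intro card_UN_disjoint) (auto simp: wcomps_def)
  finally show ?thesis .
qed

lemma card_wcomps_Suc_eq_card_bounded_parts: "card (wcomps (Suc n) k) = card (bounded_parts n k)"
proof (induction n arbitrary: k)
  case 0
  show ?case
    using wcomps_1[of k] bounded_parts_0[of k] by simp
next
  case (Suc n)
  then show ?case
    using card_wcomps_Suc[of "Suc n"] card_bounded_parts_Suc[of n] by simp
qed

section \<open>Counting decorated matrices\<close>

text \<open>Pairs \<open>(A, P)\<close> as in \<open>ParMat\<close>, with rows indexed by \<open>R\<close> and columns by \<open>C\<close>; the first
  component of an index is its level \<open>p\<close>, which bounds the number of parts of the decorations.\<close>

type_synonym dec_mat = "(nat \<times> nat \<Rightarrow> nat \<times> nat \<Rightarrow> nat) \<times> (nat \<times> nat \<Rightarrow> nat \<times> nat \<Rightarrow> nat list)"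

definition dec_mats :: "(nat \<times> nat) set \<Rightarrow> (nat \<times> nat) set \<Rightarrow> (nat \<times> nat \<Rightarrow> nat) \<Rightarrow> (nat \<times> nat \<Rightarrow> nat) \<Rightarrow> dec_mat set" where
  "dec_mats R C rs cs = {(A, P).
     (\<forall>r c. (r, c) \<notin> R \<times> C \<longrightarrow> A r c = 0 \<and> P r c = []) \<and>
     (\<forall>r\<in>R. (\<Sum>c\<in>C. A r c) = rs r) \<and>
     (\<forall>c\<in>C. (\<Sum>r\<in>R. A r c) = cs c) \<and>
     (\<forall>r\<in>R. \<forall>c\<in>C. P r c \<in> bounded_parts (min (fst r) (fst c) - 1) (A r c))}"

definition row_decorations :: "nat \<times> nat \<Rightarrow> (nat \<times> nat) set \<Rightarrow> (nat \<times> nat \<Rightarrow> nat) \<Rightarrow> (nat \<times> nat \<Rightarrow> nat list) set" where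
  "row_decorations r0 C v =
    {Q. (\<forall>c. c \<notin> C \<longrightarrow> Q c = []) \<and> (\<forall>c\<in>C. Q c \<in> bounded_parts (min (fst r0) (fst c) - 1) (v c))}"

lemma bij_betw_restrict_funs_with_default:
  "bij_betw (\<lambda>Q. restrict Q C) {Q. (\<forall>c. c \<notin> C \<longrightarrow> Q c = d) \<and> (\<forall>c\<in>C. Q c \<in> F c)} (PiE C F)"
proof (rule bij_betw_byWitness[where f'="\<lambda>f c. if c \<in> C then f c else d"])
  show "\<forall>f\<in>PiE C F. restrict (\<lambda>c. if c \<in> C then f c else d) C = f"
    by (auto intro!: ext simp: PiE_iff extensional_def)
qed (auto intro!: ext simp: PiE_iff)

lemma row_decorations_bij:
  "bij_betw (\<lambda>Q. restrict Q C) (row_decorations r0 C v) (\<Pi>\<^sub>E c\<in>C. bounded_parts (min (fst r0) (fst c) - 1) (v c))"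
  unfolding row_decorations_def by (rule bij_betw_restrict_funs_with_default)

lemma card_row_decorations:
  "finite C \<Longrightarrow> card (row_decorations r0 C v) = (\<Prod>c\<in>C. card (bounded_parts (min (fst r0) (fst c) - 1) (v c)))"
  using bij_betw_same_card[OF row_decorations_bij] by (simp add: card_PiE)

lemma finite_row_decorations: "finite C \<Longrightarrow> finite (row_decorations r0 C v)"
  using bij_betw_finite[OF row_decorations_bij] by (simp add: finite_PiE finite_bounded_parts)

lemma card_row_decorations_eq_vec_weight:
  assumes "\<forall>c\<in>set X. 1 \<le> fst c" "1 \<le> fst r0"
  shows "card (row_decorations r0 (set X) v) = vec_weight fst (fst r0) X v"
  unfolding card_row_decorations[OF finite_set] vec_weight_def
proof (rule prod.cong[OF refl])
  fix c
  assume "c \<in> set X"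
  then have "min (fst c) (fst r0) = Suc (min (fst r0) (fst c) - 1)"
    using assms by auto
  then show "card (bounded_parts (min (fst r0) (fst c) - 1) (v c)) = card (wcomps (min (fst c) (fst r0)) (v c))"
    by (simp add: card_wcomps_Suc_eq_card_bounded_parts)
qed

lemma dec_mats_remove_row:
  assumes "r0 \<notin> R" "finite R" "(A, P) \<in> dec_mats (insert r0 R) (set X) rs cs"
  shows "A r0 \<in> row_vecs X cs (rs r0)" "P r0 \<in> row_decorations r0 (set X) (A r0)"
    "(A(r0 := (\<lambda>_. 0)), P(r0 := (\<lambda>_. []))) \<in> dec_mats R (set X) rs (\<lambda>c. cs c - A r0 c)"
proof -
  let ?C = "set X"
  have Z: "\<And>r c. (r, c) \<notin> insert r0 R \<times> ?C \<Longrightarrow> A r c = 0 \<and> P r c = []"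
    and RS: "\<And>r. r \<in> insert r0 R \<Longrightarrow> (\<Sum>c\<in>?C. A r c) = rs r"
    and CS: "\<And>c. c \<in> ?C \<Longrightarrow> (\<Sum>r\<in>insert r0 R. A r c) = cs c"
    and PP: "\<And>r c. r \<in> insert r0 R \<Longrightarrow> c \<in> ?C \<Longrightarrow> P r c \<in> bounded_parts (min (fst r) (fst c) - 1) (A r c)"
    using assms(3) unfolding dec_mats_def by auto
  have col: "A r0 c + (\<Sum>r\<in>R. A r c) = cs c" if "c \<in> ?C" for c
    using CS[OF that] assms(1,2) by simp
  have "A r0 c \<le> cs c" for c
    using col[of c] Z[of r0 c] by (cases "c \<in> ?C") auto
  then show "A r0 \<in> row_vecs X cs (rs r0)"
    unfolding row_vecs_def bounded_vecs_def using Z RS by auto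
  show "P r0 \<in> row_decorations r0 ?C (A r0)"
    unfolding row_decorations_def using Z PP by auto
  have "(\<Sum>r\<in>R. (A(r0 := (\<lambda>_. 0))) r c) = cs c - A r0 c" if "c \<in> ?C" for c
  proof -
    have "(\<Sum>r\<in>R. (A(r0 := (\<lambda>_. 0))) r c) = (\<Sum>r\<in>R. A r c)"
      using assms(1) by (intro sum.cong) auto
    then show ?thesis
      using col[OF that] by linarith
  qed
  then show "(A(r0 := (\<lambda>_. 0)), P(r0 := (\<lambda>_. []))) \<in> dec_mats R ?C rs (\<lambda>c. cs c - A r0 c)"
    unfolding dec_mats_def using Z RS PP assms(1) by auto
qed

lemma dec_mats_add_row:
  assumes "r0 \<notin> R" "finite R" "v \<in> row_vecs X cs (rs r0)" "Q \<in> row_decorations r0 (set X) v"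
    "(A, P) \<in> dec_mats R (set X) rs (\<lambda>c. cs c - v c)"
  shows "(A(r0 := v), P(r0 := Q)) \<in> dec_mats (insert r0 R) (set X) rs cs"
proof -
  let ?C = "set X"
  have Z: "\<And>r c. (r, c) \<notin> R \<times> ?C \<Longrightarrow> A r c = 0 \<and> P r c = []"
    and RS: "\<And>r. r \<in> R \<Longrightarrow> (\<Sum>c\<in>?C. A r c) = rs r"
    and CS: "\<And>c. c \<in> ?C \<Longrightarrow> (\<Sum>r\<in>R. A r c) = cs c - v c"
    and PP: "\<And>r c. r \<in> R \<Longrightarrow> c \<in> ?C \<Longrightarrow> P r c \<in> bounded_parts (min (fst r) (fst c) - 1) (A r c)"
    using assms(5) unfolding dec_mats_def by auto
  have v: "\<And>c. c \<notin> ?C \<Longrightarrow> v c = 0" "\<And>c. v c \<le> cs c" "(\<Sum>c\<in>?C. v c) = rs r0"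
    using assms(3) unfolding row_vecs_def bounded_vecs_def by auto
  have Q: "\<And>c. c \<notin> ?C \<Longrightarrow> Q c = []"
    "\<And>c. c \<in> ?C \<Longrightarrow> Q c \<in> bounded_parts (min (fst r0) (fst c) - 1) (v c)"
    using assms(4) unfolding row_decorations_def by auto
  have "(\<Sum>r\<in>insert r0 R. (A(r0 := v)) r c) = v c + (\<Sum>r\<in>R. A r c)" for c
  proof -
    have "(\<Sum>r\<in>R. (A(r0 := v)) r c) = (\<Sum>r\<in>R. A r c)"
      using assms(1) by (intro sum.cong) auto
    then show ?thesis
      using assms(1,2) by simp
  qed
  then show ?thesis
    unfolding dec_mats_def using Z RS CS PP v Q assms(1) by auto
qed

lemma dec_mats_insert_row_bij:
  assumes "r0 \<notin> R" "finite R"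
  shows "bij_betw (\<lambda>(A, P). (A r0, P r0, A(r0 := (\<lambda>_. 0)), P(r0 := (\<lambda>_. []))))
     (dec_mats (insert r0 R) (set X) rs cs)
     (SIGMA v:row_vecs X cs (rs r0). row_decorations r0 (set X) v \<times> dec_mats R (set X) rs (\<lambda>c. cs c - v c))"
proof (rule bij_betw_byWitness[where f'="\<lambda>(v, Q, A, P). (A(r0 := v), P(r0 := Q))"])
  have "A r0 = (\<lambda>_. 0) \<and> P r0 = (\<lambda>_. [])" if "(A, P) \<in> dec_mats R C rs' cs'" for A P C rs' cs'
  proof -
    have "A r0 c = 0 \<and> P r0 c = []" for c
      using that assms(1) unfolding dec_mats_def by blast
    then show ?thesis
      by auto
  qed
  then show "\<forall>z\<in>SIGMA v:row_vecs X cs (rs r0). row_decorations r0 (set X) v \<times> dec_mats R (set X) rs (\<lambda>c. cs c - v c).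
      (\<lambda>(A, P). (A r0, P r0, A(r0 := (\<lambda>_. 0)), P(r0 := (\<lambda>_. [])))) ((\<lambda>(v, Q, A, P). (A(r0 := v), P(r0 := Q))) z) = z"
    by fastforce
  show "(\<lambda>(A, P). (A r0, P r0, A(r0 := (\<lambda>_. 0)), P(r0 := (\<lambda>_. [])))) ` dec_mats (insert r0 R) (set X) rs cs
      \<subseteq> (SIGMA v:row_vecs X cs (rs r0). row_decorations r0 (set X) v \<times> dec_mats R (set X) rs (\<lambda>c. cs c - v c))"
    using dec_mats_remove_row[OF assms] by fast
  show "(\<lambda>(v, Q, A, P). (A(r0 := v), P(r0 := Q))) `
      (SIGMA v:row_vecs X cs (rs r0). row_decorations r0 (set X) v \<times> dec_mats R (set X) rs (\<lambda>c. cs c - v c))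
      \<subseteq> dec_mats (insert r0 R) (set X) rs cs"
    using dec_mats_add_row[OF assms] by fast
qed auto

lemma dec_mats_no_rows: "dec_mats {} C rs cs = (if \<forall>c\<in>C. cs c = 0 then {(\<lambda>_ _. 0, \<lambda>_ _. [])} else {})"
  unfolding dec_mats_def by (auto intro!: ext)

lemma card_dec_mats:
  assumes "distinct rl" "distinct X" "\<forall>c\<in>set X. 1 \<le> fst c" "\<forall>r\<in>set rl. 1 \<le> fst r"
  shows "finite (dec_mats (set rl) (set X) rs cs) \<and> card (dec_mats (set rl) (set X) rs cs) =
      mat_count fst X cs (map (\<lambda>r. (fst r, rs r)) rl)"
  using assms
proof (induction rl arbitrary: cs)
  case Nil
  then show ?case
    by (simp add: dec_mats_no_rows)
next
  case (Cons r0 rl)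
  have r0: "r0 \<notin> set rl" and d: "distinct rl"
    using Cons.prems by auto
  have l0: "1 \<le> fst r0"
    using Cons.prems by simp
  let ?S = "SIGMA v:row_vecs X cs (rs r0). row_decorations r0 (set X) v \<times> dec_mats (set rl) (set X) rs (\<lambda>c. cs c - v c)"
  have bij: "bij_betw (\<lambda>(A, P). (A r0, P r0, A(r0 := (\<lambda>_. 0)), P(r0 := (\<lambda>_. [])))) (dec_mats (insert r0 (set rl)) (set X) rs cs) ?S"
    by (rule dec_mats_insert_row_bij[OF r0]) simp
  have IH: "\<And>v. finite (dec_mats (set rl) (set X) rs (\<lambda>c. cs c - v c)) \<and>
      card (dec_mats (set rl) (set X) rs (\<lambda>c. cs c - v c)) = mat_count fst X (\<lambda>c. cs c - v c) (map (\<lambda>r. (fst r, rs r)) rl)"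
    using Cons.IH d Cons.prems by simp
  have fin_V: "finite (row_vecs X cs (rs r0))"
    unfolding row_vecs_def using finite_bounded_vecs[of X cs "rs r0"] by simp
  have fin_S: "finite ?S"
    using fin_V finite_row_decorations IH by (intro finite_SigmaI finite_cartesian_product) auto
  have "card ?S = (\<Sum>v\<in>row_vecs X cs (rs r0). card (row_decorations r0 (set X) v \<times> dec_mats (set rl) (set X) rs (\<lambda>c. cs c - v c)))"
    using fin_V finite_row_decorations IH by (intro card_SigmaI) auto
  also have "\<dots> = (\<Sum>v\<in>row_vecs X cs (rs r0). vec_weight fst (fst r0) X v * mat_count fst X (\<lambda>c. cs c - v c) (map (\<lambda>r. (fst r, rs r)) rl))"
    using card_row_decorations_eq_vec_weight[OF Cons.prems(3) l0] IH by (simp add: card_cartesian_product)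
  also have "\<dots> = mat_count fst X cs (map (\<lambda>r. (fst r, rs r)) (r0 # rl))"
    by (simp add: row_vecs_def)
  finally have "card ?S = mat_count fst X cs (map (\<lambda>r. (fst r, rs r)) (r0 # rl))" .
  moreover have "card (dec_mats (set (r0 # rl)) (set X) rs cs) = card ?S"
    using bij_betw_same_card[OF bij] by simp
  moreover have "finite (dec_mats (set (r0 # rl)) (set X) rs cs)"
    using bij_betw_finite[OF bij] fin_S by simp
  ultimately show ?case
    by simp
qed

section \<open>Semistandard fillings and walks\<close>

text \<open>Fillings of the cells of an \<open>mshape\<close> by the symbols \<open>(i, p)\<close> of the statement; a symbol is
  compared through \<open>prod.swap\<close>, which turns the order of the statement into the lexicographic
  order on \<open>(p, i)\<close>. The alphabet \<open>S\<close> and the content \<open>cnt\<close> are given on swapped symbols.\<close>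

definition semistd_on :: "mshape \<Rightarrow> (nat \<times> nat \<times> nat \<Rightarrow> nat \<times> nat) \<Rightarrow> bool" where
  "semistd_on g T \<longleftrightarrow>
     (\<forall>j r c. (j, r, c) \<in> cells g \<and> (j, r, Suc c) \<in> cells g \<longrightarrow> sym_le (T (j, r, c)) (T (j, r, Suc c))) \<and>
     (\<forall>j r c. (j, r, c) \<in> cells g \<and> (j, Suc r, c) \<in> cells g \<longrightarrow> sym_less (T (j, r, c)) (T (j, Suc r, c))) \<and>
     (\<forall>j r c. (j, r, c) \<in> cells g \<longrightarrow> j \<le> snd (T (j, r, c)))"

definition ssts :: "mshape \<Rightarrow> (nat \<times> nat) set \<Rightarrow> (nat \<times> nat \<Rightarrow> nat) \<Rightarrow> (nat \<times> nat \<times> nat \<Rightarrow> nat \<times> nat) set" where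
  "ssts g S cnt = {T. (\<forall>x. x \<notin> cells g \<longrightarrow> T x = (0, 0)) \<and> (\<forall>x\<in>cells g. prod.swap (T x) \<in> S) \<and>
      (\<forall>s\<in>S. card {x \<in> cells g. prod.swap (T x) = s} = cnt s) \<and> semistd_on g T}"

lemma sym_less_swap: "sym_less a b \<longleftrightarrow> prod.swap a < prod.swap b"
  unfolding sym_less_def by (cases a, cases b) auto

lemma sym_le_swap: "sym_le a b \<longleftrightarrow> prod.swap a \<le> prod.swap b"
  unfolding sym_le_def sym_less_swap by (cases a, cases b) auto

lemma sstsD:
  assumes "T \<in> ssts g S cnt"
  shows "\<And>x. x \<notin> cells g \<Longrightarrow> T x = (0, 0)" "\<And>x. x \<in> cells g \<Longrightarrow> prod.swap (T x) \<in> S"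
    "\<And>t. t \<in> S \<Longrightarrow> card {x \<in> cells g. prod.swap (T x) = t} = cnt t" "semistd_on g T"
  using assms unfolding ssts_def by auto

lemma finite_ssts:
  assumes "fin_support g" "finite S"
  shows "finite (ssts g S cnt)"
proof -
  have "ssts g S cnt \<subseteq> {f. \<forall>x. (x \<in> cells g \<longrightarrow> f x \<in> prod.swap ` S) \<and> (x \<notin> cells g \<longrightarrow> f x = (0, 0))}"
    unfolding ssts_def by (auto intro: image_eqI[of _ prod.swap, OF swap_swap[symmetric]])
  then show ?thesis
    by (rule finite_subset) (intro finite_set_of_finite_funs finite_cells finite_imageI assms)
qed

lemma semistd_on_subset:
  assumes "semistd_on g T" "cells g' \<subseteq> cells g" "\<And>x. x \<in> cells g' \<Longrightarrow> T' x = T x"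
  shows "semistd_on g' T'"
  unfolding semistd_on_def
proof (intro conjI allI impI)
  fix j r c
  show "sym_le (T' (j, r, c)) (T' (j, r, Suc c))" if "(j, r, c) \<in> cells g' \<and> (j, r, Suc c) \<in> cells g'"
    using that assms unfolding semistd_on_def by (simp add: subset_iff)
  show "sym_less (T' (j, r, c)) (T' (j, Suc r, c))" if "(j, r, c) \<in> cells g' \<and> (j, Suc r, c) \<in> cells g'"
    using that assms unfolding semistd_on_def by (simp add: subset_iff)
  show "j \<le> snd (T' (j, r, c))" if "(j, r, c) \<in> cells g'"
    using that assms unfolding semistd_on_def by (simp add: subset_iff)
qed

lemma down_closed_eq_atLeastAtMost:
  fixes A :: "nat set"
  assumes "A \<subseteq> {1..n}" "\<forall>c\<in>A. \<forall>c'. 1 \<le> c' \<and> c' \<le> c \<longrightarrow> c' \<in> A"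
  shows "A = {1..card A}"
proof (cases "A = {}")
  case True
  then show ?thesis
    by simp
next
  case False
  have fA: "finite A"
    using assms(1) finite_subset by blast
  let ?m = "Max A"
  have mA: "?m \<in> A"
    using fA False by simp
  have "A = {1..?m}"
  proof
    show "A \<subseteq> {1..?m}"
      using assms(1) fA by auto
    show "{1..?m} \<subseteq> A"
      using assms(2) mA by auto
  qed
  then show ?thesis
    by (metis card_atLeastAtMost diff_Suc_1)
qed

lemma semistd_row_mono:
  assumes "semistd_on g T" "(j, r, c) \<in> cells g" "1 \<le> c'" "c' \<le> c"
  shows "prod.swap (T (j, r, c')) \<le> prod.swap (T (j, r, c))"
  using assms(2,4)
proof (induction c rule: nat_less_induct)
  case (1 c)
  show ?case
  proof (cases "c' = c")
    case True
    then show ?thesis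
      by simp
  next
    case False
    then have lt: "c' < c"
      using 1(3) by simp
    then obtain d where d: "c = Suc d" "c' \<le> d"
      by (cases c) auto
    have cd: "(j, r, d) \<in> cells g"
      using cells_left_closed[OF 1(2) _, of d] d assms(3) by simp
    have "prod.swap (T (j, r, c')) \<le> prod.swap (T (j, r, d))"
      using 1(1) d cd by simp
    moreover have "sym_le (T (j, r, d)) (T (j, r, Suc d))"
      using assms(1) cd 1(2) d unfolding semistd_on_def by blast
    ultimately show ?thesis
      using d unfolding sym_le_swap by simp
  qed
qed

text \<open>For the largest letter \<open>s\<close>, the cells not containing \<open>s\<close> form an initial segment of every row;
  \<open>shape_below\<close> records the lengths of these segments.\<close>

definition shape_below :: "nat \<times> nat \<Rightarrow> mshape \<Rightarrow> (nat \<times> nat \<times> nat \<Rightarrow> nat \<times> nat) \<Rightarrow> mshape" where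
  "shape_below s g T = (\<lambda>j r. card {c \<in> {1..g j r}. prod.swap (T (j, Suc r, c)) \<noteq> s})"

definition restrict_filling :: "mshape \<Rightarrow> (nat \<times> nat \<times> nat \<Rightarrow> nat \<times> nat) \<Rightarrow> (nat \<times> nat \<times> nat \<Rightarrow> nat \<times> nat)" where
  "restrict_filling g' T = (\<lambda>x. if x \<in> cells g' then T x else (0, 0))"

definition extend_filling :: "nat \<times> nat \<Rightarrow> mshape \<Rightarrow> mshape \<Rightarrow> (nat \<times> nat \<times> nat \<Rightarrow> nat \<times> nat) \<Rightarrow> (nat \<times> nat \<times> nat \<Rightarrow> nat \<times> nat)" where
  "extend_filling s g g' T' = (\<lambda>x. if x \<in> cells g' then T' x else if x \<in> cells g then prod.swap s else (0, 0))"

context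
  fixes g :: mshape and S :: "(nat \<times> nat) set" and cnt :: "nat \<times> nat \<Rightarrow> nat" and s :: "nat \<times> nat"
  assumes fin_g: "fin_support g" and mpart_g: "is_mpartition g" and fin_S: "finite S" and s_in_S: "s \<in> S"
    and s_max: "\<forall>t\<in>S. t \<le> s"
begin

lemma below_cells_row_prefix:
  assumes T: "T \<in> ssts g S cnt"
  shows "{c \<in> {1..g j r}. prod.swap (T (j, Suc r, c)) \<noteq> s} = {1..shape_below s g T j r}"
proof -
  let ?A = "{c \<in> {1..g j r}. prod.swap (T (j, Suc r, c)) \<noteq> s}"
  have "?A = {1..card ?A}"
  proof (rule down_closed_eq_atLeastAtMost[of _ "g j r"])
    show "?A \<subseteq> {1..g j r}"
      by auto
    show "\<forall>c\<in>?A. \<forall>c'. 1 \<le> c' \<and> c' \<le> c \<longrightarrow> c' \<in> ?A"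
    proof (intro ballI allI impI)
      fix c c'
      assume c: "c \<in> ?A" and c': "1 \<le> c' \<and> c' \<le> c"
      have cell: "(j, Suc r, c) \<in> cells g"
        using c unfolding mem_cells_iff by auto
      have le: "prod.swap (T (j, Suc r, c')) \<le> prod.swap (T (j, Suc r, c))"
        using semistd_row_mono[OF sstsD(4)[OF T] cell] c' by simp
      have inS: "prod.swap (T (j, Suc r, c)) \<in> S"
        using sstsD(2)[OF T cell] .
      have ne: "prod.swap (T (j, Suc r, c)) \<noteq> s"
        using c by simp
      have "prod.swap (T (j, Suc r, c')) \<noteq> s"
      proof
        assume "prod.swap (T (j, Suc r, c')) = s"
        then have "s \<le> prod.swap (T (j, Suc r, c))"
          using le by simp
        moreover have "prod.swap (T (j, Suc r, c)) \<le> s"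
          using s_max inS by blast
        ultimately show False
          using ne by simp
      qed
      then show "c' \<in> ?A"
        using c c' by auto
    qed
  qed
  then show ?thesis
    unfolding shape_below_def by simp
qed

lemma below_iff_le_shape_below:
  assumes T: "T \<in> ssts g S cnt" and c: "1 \<le> c" "c \<le> g j r"
  shows "prod.swap (T (j, Suc r, c)) \<noteq> s \<longleftrightarrow> c \<le> shape_below s g T j r"
proof -
  have "c \<in> {c \<in> {1..g j r}. prod.swap (T (j, Suc r, c)) \<noteq> s} \<longleftrightarrow>
      c \<in> {1..shape_below s g T j r}"
    using below_cells_row_prefix[OF T] by simp
  then show ?thesis
    using c by simp
qed

lemma shape_below_le: "shape_below s g T j r \<le> g j r"
  unfolding shape_below_def by (rule le_trans[OF card_mono[of "{1..g j r}"]]) auto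

lemma shape_below_ge_next_row:
  assumes T: "T \<in> ssts g S cnt"
  shows "g j (Suc r) \<le> shape_below s g T j r"
proof (cases "g j (Suc r) = 0")
  case True
  then show ?thesis
    by simp
next
  case False
  let ?c = "g j (Suc r)"
  have sh: "g j (Suc r) \<le> g j r"
    using mpart_g unfolding is_mpartition_def by simp
  have c1: "(j, Suc r, ?c) \<in> cells g"
    using False sh unfolding mem_cells_iff by simp
  have c2: "(j, Suc (Suc r), ?c) \<in> cells g"
    using False unfolding mem_cells_iff by simp
  have "sym_less (T (j, Suc r, ?c)) (T (j, Suc (Suc r), ?c))"
    using sstsD(4)[OF T] c1 c2 unfolding semistd_on_def by blast
  then have lt: "prod.swap (T (j, Suc r, ?c)) < prod.swap (T (j, Suc (Suc r), ?c))"
    unfolding sym_less_swap .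
  have "prod.swap (T (j, Suc (Suc r), ?c)) \<le> s"
    using s_max sstsD(2)[OF T c2] by blast
  then have "prod.swap (T (j, Suc r, ?c)) \<noteq> s"
    using lt by auto
  then show ?thesis
    using below_iff_le_shape_below[OF T, of ?c j r] False sh by simp
qed

lemma shape_below_outside:
  assumes T: "T \<in> ssts g S cnt" and j: "\<not> (1 \<le> j \<and> j \<le> fst s)"
  shows "shape_below s g T j = g j"
proof
  fix r
  show "shape_below s g T j r = g j r"
  proof (cases "j = 0")
    case True
    then have "g j r = 0"
      using mpart_g unfolding is_mpartition_def by simp
    then show ?thesis
      unfolding shape_below_def by simp
  next
    case False
    then have jp: "fst s < j"
      using j by simp
    have "{c \<in> {1..g j r}. prod.swap (T (j, Suc r, c)) \<noteq> s} = {1..g j r}"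
    proof (intro set_eqI iffI)
      fix c
      assume c: "c \<in> {1..g j r}"
      then have cell: "(j, Suc r, c) \<in> cells g"
        unfolding mem_cells_iff by simp
      have "j \<le> snd (T (j, Suc r, c))"
        using sstsD(4)[OF T] cell unfolding semistd_on_def by blast
      then have "fst (prod.swap (T (j, Suc r, c))) \<noteq> fst s"
        using jp by (simp add: prod.swap_def)
      then show "c \<in> {c \<in> {1..g j r}. prod.swap (T (j, Suc r, c)) \<noteq> s}"
        using c by auto
    qed simp
    then show ?thesis
      unfolding shape_below_def by simp
  qed
qed

lemma cells_shape_below:
  assumes T: "T \<in> ssts g S cnt"
  shows "cells (shape_below s g T) = {x \<in> cells g. prod.swap (T x) \<noteq> s}"
proof (intro set_eqI)
  fix x :: "nat \<times> nat \<times> nat"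
  obtain j R c where x: "x = (j, R, c)"
    by (cases x) auto
  show "x \<in> cells (shape_below s g T) \<longleftrightarrow>
      x \<in> {x \<in> cells g. prod.swap (T x) \<noteq> s}"
  proof (cases "1 \<le> R \<and> 1 \<le> c \<and> c \<le> g j (R - 1)")
    case True
    then obtain r where r: "R = Suc r"
      by (cases R) auto
    have cell: "(j, Suc r, c) \<in> cells g"
      using True r by (simp add: mem_cells_iff)
    show ?thesis
      using below_iff_le_shape_below[OF T, of c j r] True cell unfolding x r by (simp add: mem_cells_iff)
  next
    case False
    then show ?thesis
      unfolding x using shape_below_le[of T j "R - 1"] by (auto simp: mem_cells_iff)
  qed
qed

lemma strip_step_shape_below:
  assumes T: "T \<in> ssts g S cnt"
  shows "strip_step (fst s) (cnt s) (shape_below s g T) g"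
  unfolding strip_step_def hstrips_def
proof (intro conjI allI impI)
  fix j
  assume "1 \<le> j \<and> j \<le> fst s"
  show "hstrip (shape_below s g T j) (g j)"
    unfolding hstrip_def using shape_below_le shape_below_ge_next_row[OF T] by blast
next
  fix j
  assume "\<not> (1 \<le> j \<and> j \<le> fst s)"
  then show "g j = shape_below s g T j"
    using shape_below_outside[OF T] by simp
next
  have le: "\<And>j i. shape_below s g T j i \<le> g j i"
    using shape_below_le by blast
  show V: "fin_support (shape_below s g T)"
    using fin_support_le[OF fin_g le] .
  show "fin_support g"
    using fin_g .
  have "cells g = cells (shape_below s g T) \<union> {x \<in> cells g. prod.swap (T x) = s}"
    using cells_shape_below[OF T] by auto
  moreover have "cells (shape_below s g T) \<inter> {x \<in> cells g. prod.swap (T x) = s} = {}"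
    using cells_shape_below[OF T] by auto
  moreover have "finite (cells (shape_below s g T))"
    using finite_cells[OF V] .
  moreover have "finite {x \<in> cells g. prod.swap (T x) = s}"
    using finite_cells[OF fin_g] by simp
  ultimately have "card (cells g) = card (cells (shape_below s g T)) + card {x \<in> cells g. prod.swap (T x) = s}"
    using card_Un_disjoint[of "cells (shape_below s g T)" "{x \<in> cells g. prod.swap (T x) = s}"] by simp
  then show "msize g = msize (shape_below s g T) + cnt s"
    unfolding msize_def using sstsD(3)[OF T s_in_S] by simp
qed

lemma restrict_filling_in_ssts:
  assumes T: "T \<in> ssts g S cnt"
  shows "restrict_filling (shape_below s g T) T \<in> ssts (shape_below s g T) (S - {s}) cnt"
proof -
  let ?g = "shape_below s g T" and ?T = "restrict_filling (shape_below s g T) T"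
  have cells_below: "cells ?g = {x \<in> cells g. prod.swap (T x) \<noteq> s}"
    using cells_shape_below[OF T] .
  have outside: "\<forall>x. x \<notin> cells ?g \<longrightarrow> ?T x = (0, 0)"
    unfolding restrict_filling_def by simp
  have alphabet: "\<forall>x\<in>cells ?g. prod.swap (?T x) \<in> S - {s}"
    using cells_below sstsD(2)[OF T] unfolding restrict_filling_def by auto
  have content: "\<forall>t\<in>S - {s}. card {x \<in> cells ?g. prod.swap (?T x) = t} = cnt t"
  proof
    fix t
    assume t: "t \<in> S - {s}"
    have "{x \<in> cells ?g. prod.swap (?T x) = t} = {x \<in> cells g. prod.swap (T x) = t}"
      using cells_below t unfolding restrict_filling_def by auto
    then show "card {x \<in> cells ?g. prod.swap (?T x) = t} = cnt t"
      using sstsD(3)[OF T] t by simp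
  qed
  have semistd: "semistd_on ?g ?T"
    by (rule semistd_on_subset[OF sstsD(4)[OF T]]) (use cells_below in \<open>auto simp: restrict_filling_def\<close>)
  show ?thesis
    unfolding ssts_def using outside alphabet content semistd by blast
qed

lemma extend_restrict_filling:
  assumes T: "T \<in> ssts g S cnt"
  shows "extend_filling s g (shape_below s g T) (restrict_filling (shape_below s g T) T) = T"
proof
  fix x
  have cells_below: "cells (shape_below s g T) = {x \<in> cells g. prod.swap (T x) \<noteq> s}"
    using cells_shape_below[OF T] .
  show "extend_filling s g (shape_below s g T) (restrict_filling (shape_below s g T) T) x = T x"
  proof (cases "x \<in> cells g")
    case True
    show ?thesis
    proof (cases "prod.swap (T x) = s")
      case True
      then have "T x = prod.swap s"
        by (metis swap_swap)
      moreover have "x \<notin> cells (shape_below s g T)"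
        using cells_below True by simp
      ultimately show ?thesis
        unfolding extend_filling_def using \<open>x \<in> cells g\<close> by simp
    next
      case False
      then have "x \<in> cells (shape_below s g T)"
        using cells_below \<open>x \<in> cells g\<close> by simp
      then show ?thesis
        unfolding extend_filling_def restrict_filling_def by simp
    qed
  next
    case False
    then have "x \<notin> cells (shape_below s g T)"
      using cells_below by simp
    then show ?thesis
      unfolding extend_filling_def restrict_filling_def using False sstsD(1)[OF T, of x] by simp
  qed
qed

lemma content_extend_filling:
  assumes step: "strip_step (fst s) (cnt s) g' g" and T': "T' \<in> ssts g' (S - {s}) cnt" and t: "t \<in> S"
  shows "card {x \<in> cells g. prod.swap (extend_filling s g g' T' x) = t} = cnt t"
proof (cases "t = s")
  case True
  have sub: "cells g' \<subseteq> cells g"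
    using step by (intro cells_mono strip_step_le)
  have "{x \<in> cells g. prod.swap (extend_filling s g g' T' x) = t} = cells g - cells g'"
    using sstsD[OF T'] True unfolding extend_filling_def by (auto simp: sub)
  moreover have "card (cells g - cells g') = card (cells g) - card (cells g')"
    using sub finite_cells[OF fin_g] by (intro card_Diff_subset) (auto intro: finite_subset)
  moreover have "msize g = msize g' + cnt s"
    using step unfolding strip_step_def by simp
  ultimately show ?thesis
    using True unfolding msize_def by simp
next
  case False
  have "cells g' \<subseteq> cells g"
    using step by (intro cells_mono strip_step_le)
  then have "{x \<in> cells g. prod.swap (extend_filling s g g' T' x) =
      t} = {x \<in> cells g'. prod.swap (T' x) = t}"
    using False unfolding extend_filling_def by auto
  then show ?thesis
    using sstsD(3)[OF T'] t False by simp
qed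

text \<open>The new cells of a horizontal strip lie in distinct columns.\<close>

lemma strip_step_cell_above_new:
  assumes "strip_step p b g' g" "(j, Suc r, c) \<in> cells g" "(j, Suc r, c) \<notin> cells g'" "1 \<le> r"
  shows "(j, r, c) \<in> cells g'"
proof (cases "1 \<le> j \<and> j \<le> p")
  case True
  then have "g j (Suc (r - 1)) \<le> g' j (r - 1)"
    using assms(1) unfolding strip_step_def hstrips_def hstrip_def by blast
  then show ?thesis
    using assms(2,4) by (simp add: mem_cells_iff)
next
  case False
  then have "g j = g' j"
    using assms(1) unfolding strip_step_def hstrips_def by simp
  then show ?thesis
    using assms(2,3) unfolding mem_cells_iff by simp
qed

lemma strip_step_new_cell_component:
  assumes "strip_step p b g' g" "(j, r, c) \<in> cells g" "(j, r, c) \<notin> cells g'"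
  shows "1 \<le> j \<and> j \<le> p"
proof (rule ccontr)
  assume "\<not> (1 \<le> j \<and> j \<le> p)"
  then have "g j = g' j"
    using assms(1) unfolding strip_step_def hstrips_def by simp
  then show False
    using assms(2,3) unfolding mem_cells_iff by simp
qed

lemma extend_filling_old_cell:
  assumes "T' \<in> ssts g' (S - {s}) cnt" "x \<in> cells g'"
  shows "extend_filling s g g' T' x = T' x" "prod.swap (T' x) < s"
  using assms sstsD(2)[OF assms] s_max unfolding extend_filling_def by (auto simp: order.strict_iff_order)

lemma extend_filling_new_cell: "x \<in> cells g \<Longrightarrow> x \<notin> cells g' \<Longrightarrow> extend_filling s g g' T' x = prod.swap s"
  unfolding extend_filling_def by simp

lemma semistd_on_extend_filling:
  assumes step: "strip_step (fst s) (cnt s) g' g" and T': "T' \<in> ssts g' (S - {s}) cnt"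
  shows "semistd_on g (extend_filling s g g' T')"
  unfolding semistd_on_def
proof (intro conjI allI impI)
  let ?T = "extend_filling s g g' T'"
  note old = extend_filling_old_cell[OF T'] and new = extend_filling_new_cell[of _ g' T']
  have semi: "semistd_on g' T'"
    using sstsD(4)[OF T'] .
  fix j r c
  show "sym_le (?T (j, r, c)) (?T (j, r, Suc c))" if "(j, r, c) \<in> cells g \<and> (j, r, Suc c) \<in> cells g"
  proof (cases "(j, r, Suc c) \<in> cells g'")
    case True
    then have "(j, r, c) \<in> cells g'"
      using that cells_left_closed[OF True, of c] by (simp add: mem_cells_iff)
    then show ?thesis
      using True semi old unfolding semistd_on_def by simp
  next
    case False
    have "prod.swap (?T (j, r, c)) \<le> s"
      using old new that by (cases "(j, r, c) \<in> cells g'") (auto simp: less_imp_le)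
    then show ?thesis
      unfolding sym_le_swap using new False that by simp
  qed
  show "sym_less (?T (j, r, c)) (?T (j, Suc r, c))" if "(j, r, c) \<in> cells g \<and> (j, Suc r, c) \<in> cells g"
  proof (cases "(j, Suc r, c) \<in> cells g'")
    case True
    then have "(j, r, c) \<in> cells g'"
      using that is_mpartition_antimono[OF is_mpartition_strip_step[OF step, THEN iffD2, OF mpart_g], of "r - 1" r j]
      by (auto simp: mem_cells_iff)
    then show ?thesis
      using True semi old unfolding semistd_on_def by simp
  next
    case False
    then have "(j, r, c) \<in> cells g'"
      using strip_step_cell_above_new[OF step] that by (auto simp: mem_cells_iff)
    then show ?thesis
      unfolding sym_less_swap using old new False that by simp
  qed
  show "j \<le> snd (?T (j, r, c))" if "(j, r, c) \<in> cells g"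
    using semi old new strip_step_new_cell_component[OF step that] that
    unfolding semistd_on_def by (cases "(j, r, c) \<in> cells g'") auto
qed

lemma extend_filling_in_ssts:
  assumes step: "strip_step (fst s) (cnt s) g' g" and T': "T' \<in> ssts g' (S - {s}) cnt"
  shows "extend_filling s g g' T' \<in> ssts g S cnt"
proof -
  have "cells g' \<subseteq> cells g"
    using step by (intro cells_mono strip_step_le)
  then have "\<forall>x. x \<notin> cells g \<longrightarrow> extend_filling s g g' T' x = (0, 0)"
    unfolding extend_filling_def by auto
  moreover have "\<forall>x\<in>cells g. prod.swap (extend_filling s g g' T' x) \<in> S"
    using sstsD(2)[OF T'] s_in_S unfolding extend_filling_def by auto
  ultimately show ?thesis
    unfolding ssts_def using content_extend_filling[OF step T'] semistd_on_extend_filling[OF step T'] by blast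
qed

lemma shape_below_extend_filling:
  assumes step: "strip_step (fst s) (cnt s) g' g" and T': "T' \<in> ssts g' (S - {s}) cnt"
  shows "shape_below s g (extend_filling s g g' T') = g'"
proof (intro ext)
  fix j r
  note alphabet = sstsD(2)[OF T']
  have le: "g' j r \<le> g j r"
    using strip_step_le[OF step] .
  have "{c \<in> {1..g j r}. prod.swap (extend_filling s g g' T' (j, Suc r, c)) \<noteq> s} = {1..g' j r}"
  proof (intro set_eqI iffI)
    fix c
    assume c: "c \<in> {c \<in> {1..g j r}. prod.swap (extend_filling s g g' T' (j, Suc r, c)) \<noteq> s}"
    show "c \<in> {1..g' j r}"
    proof (rule ccontr)
      assume "c \<notin> {1..g' j r}"
      then have "(j, Suc r, c) \<notin> cells g'" "(j, Suc r, c) \<in> cells g"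
        using c by (auto simp: mem_cells_iff)
      then show False
        using c unfolding extend_filling_def by simp
    qed
  next
    fix c
    assume c: "c \<in> {1..g' j r}"
    then have "(j, Suc r, c) \<in> cells g'"
      by (simp add: mem_cells_iff)
    then show "c \<in> {c \<in> {1..g j r}. prod.swap (extend_filling s g g' T' (j, Suc r, c)) \<noteq> s}"
      using c le alphabet unfolding extend_filling_def by auto
  qed
  then show "shape_below s g (extend_filling s g g' T') j r = g' j r"
    unfolding shape_below_def by simp
qed

lemma restrict_extend_filling:
  assumes step: "strip_step (fst s) (cnt s) g' g" and T': "T' \<in> ssts g' (S - {s}) cnt"
  shows "restrict_filling (shape_below s g (extend_filling s g g' T')) (extend_filling s g g' T') = T'"
proof (intro ext)
  fix x
  note outside = sstsD(1)[OF T']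
  have "shape_below s g (extend_filling s g g' T') = g'"
    by (rule shape_below_extend_filling[OF step T'])
  then have "restrict_filling (shape_below s g (extend_filling s g g' T')) (extend_filling s g g' T') x =
      restrict_filling g' (extend_filling s g g' T') x"
    by simp
  also have "\<dots> = T' x"
    unfolding restrict_filling_def extend_filling_def using outside by simp
  finally show "restrict_filling (shape_below s g (extend_filling s g g' T')) (extend_filling s g g' T') x = T' x" .
qed

lemma ssts_remove_max_bij:
  "bij_betw (\<lambda>T. (shape_below s g T, restrict_filling (shape_below s g T) T)) (ssts g S cnt)
    (SIGMA g':{g'. strip_step (fst s) (cnt s) g' g}. ssts g' (S - {s}) cnt)"
  (is "bij_betw ?f _ ?M")
proof (rule bij_betw_byWitness[where f'="\<lambda>(g', T'). extend_filling s g g' T'"])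
  show "\<forall>T\<in>ssts g S cnt. (\<lambda>(g', T'). extend_filling s g g' T') (?f T) = T"
    using extend_restrict_filling by simp
  show "\<forall>z\<in>?M. ?f ((\<lambda>(g', T'). extend_filling s g g' T') z) = z"
    using shape_below_extend_filling restrict_extend_filling by auto
  show "?f ` ssts g S cnt \<subseteq> ?M"
    using strip_step_shape_below restrict_filling_in_ssts by auto
  show "(\<lambda>(g', T'). extend_filling s g g' T') ` ?M \<subseteq> ssts g S cnt"
    using extend_filling_in_ssts by auto
qed

lemma card_ssts_remove_max:
  "card (ssts g S cnt) = (\<Sum>g'\<in>{g'. strip_step (fst s) (cnt s) g' g}. card (ssts g' (S - {s}) cnt))"
proof -
  have "finite (ssts g' (S - {s}) cnt)" if "strip_step (fst s) (cnt s) g' g" for g'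
    using that fin_S strip_step_fin_support by (intro finite_ssts) auto
  then show ?thesis
    using bij_betw_same_card[OF ssts_remove_max_bij] finite_strip_preds by (simp add: card_SigmaI)
qed

end

lemma sorted_list_of_set_insert_greatest:
  fixes S :: "'a::linorder set"
  assumes "finite S" "\<forall>a\<in>S. a < b"
  shows "sorted_list_of_set (insert b S) = sorted_list_of_set S @ [b]"
proof -
  have "b \<notin> S"
    using assms(2) by blast
  then have "sorted_wrt (<) (sorted_list_of_set S @ [b]) \<and> set (sorted_list_of_set S @ [b]) = insert b S \<and>
      length (sorted_list_of_set S @ [b]) = card (insert b S)"
    using assms by (auto simp: sorted_wrt_append)
  moreover have "finite (insert b S)"
    using assms(1) by simp
  ultimately show ?thesis
    using sorted_list_of_set_unique by blast
qed

definition up_word_of :: "(nat \<times> nat) set \<Rightarrow> (nat \<times> nat \<Rightarrow> nat) \<Rightarrow> step list" where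
  "up_word_of S cnt = up_word fst cnt (sorted_list_of_set S)"

definition down_word_of :: "(nat \<times> nat) set \<Rightarrow> (nat \<times> nat \<Rightarrow> nat) \<Rightarrow> step list" where
  "down_word_of S cnt = down_word (map (\<lambda>s. (fst s, cnt s)) (rev (sorted_list_of_set S)))"

lemma ssts_empty_alphabet: "ssts g {} cnt = (if g = mempty then {\<lambda>_. (0, 0)} else {})"
proof (cases "g = mempty")
  case True
  then have "cells g = {}"
    by (simp add: cells_mempty_iff)
  then show ?thesis
    using True by (auto simp: ssts_def semistd_on_def)
next
  case False
  then obtain x where "x \<in> cells g"
    using cells_mempty_iff by blast
  then have "ssts g {} cnt = {}"
    unfolding ssts_def by blast
  with False show ?thesis
    by simp
qed

lemma card_ssts_empty_alphabet: "card (ssts g {} cnt) = (if g = mempty then 1 else 0)"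
  by (simp add: ssts_empty_alphabet)

lemma card_ssts_insert_greatest:
  assumes "finite S" "\<forall>a\<in>S. a < s" "fin_support g" "is_mpartition g"
  shows "card (ssts g (insert s S) cnt) =
      (\<Sum>g'\<in>{g'. strip_step (fst s) (cnt s) g' g}. card (ssts g' S cnt))"
proof -
  have "insert s S - {s} = S"
    using assms(2) by auto
  then show ?thesis
    using card_ssts_remove_max[of g "insert s S" s cnt] assms by (auto simp: less_imp_le)
qed

text \<open>Peeling off the largest letter shows that semistandard fillings of \<open>g\<close> correspond to walks
  from \<open>g\<close> down to the empty multipartition, and dually to walks from the empty one up to \<open>g\<close>.\<close>

lemma card_ssts_eq_walks_down:
  assumes "finite S" "fin_support g" "is_mpartition g"
  shows "card (ssts g S cnt) = walks g (down_word_of S cnt) mempty"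
  using assms
proof (induction S arbitrary: g rule: finite_linorder_max_induct)
  case empty
  then show ?case
    by (simp add: card_ssts_empty_alphabet down_word_of_def down_word_def)
next
  case (insert s S)
  have "card (ssts g (insert s S) cnt) = (\<Sum>g'\<in>{g'. strip_step (fst s) (cnt s) g' g}. card (ssts g' S cnt))"
    using card_ssts_insert_greatest insert.hyps insert.prems by blast
  also have "\<dots> = (\<Sum>g'\<in>{g'. strip_step (fst s) (cnt s) g' g}. walks g' (down_word_of S cnt) mempty)"
    using insert.IH insert.prems strip_step_fin_support is_mpartition_strip_step by (intro sum.cong) auto
  also have "\<dots> = walks g (down_word_of (insert s S) cnt) mempty"
    unfolding down_word_of_def sorted_list_of_set_insert_greatest[OF insert.hyps] by (simp add: down_word_def)
  finally show ?case .
qed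

lemma card_ssts_eq_walks_up:
  assumes "finite S" "fin_support g" "is_mpartition g"
  shows "card (ssts g S cnt) = walks mempty (up_word_of S cnt) g"
  using assms
proof (induction S arbitrary: g rule: finite_linorder_max_induct)
  case empty
  then show ?case
    by (auto simp: card_ssts_empty_alphabet up_word_of_def up_word_def)
next
  case (insert s S)
  have "card (ssts g (insert s S) cnt) = (\<Sum>g'\<in>{g'. strip_step (fst s) (cnt s) g' g}. card (ssts g' S cnt))"
    using card_ssts_insert_greatest insert.hyps insert.prems by blast
  also have "\<dots> = (\<Sum>g'\<in>{g'. strip_step (fst s) (cnt s) g' g}. walks mempty (up_word_of S cnt) g')"
    using insert.IH insert.prems strip_step_fin_support is_mpartition_strip_step by (intro sum.cong) auto
  also have "\<dots> = walks mempty (up_word_of (insert s S) cnt) g"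
    unfolding up_word_of_def sorted_list_of_set_insert_greatest[OF insert.hyps] by (simp add: up_word_def walks_snoc)
  finally show ?case .
qed

section \<open>The objects of the statement\<close>

definition mshape_of :: "nat list list \<Rightarrow> mshape" where
  "mshape_of la = (\<lambda>j r. if 1 \<le> j \<and> j \<le> length la \<and> r < length (la ! (j - 1)) then la ! (j - 1) ! r else 0)"

lemma Cells_eq_cells: "Cells la = cells (mshape_of la)"
proof (intro set_eqI)
  fix x :: "nat \<times> nat \<times> nat"
  obtain j r c where x: "x = (j, r, c)"
    by (cases x) auto
  show "x \<in> Cells la \<longleftrightarrow> x \<in> cells (mshape_of la)"
    unfolding x Cells_def mem_cells_iff mshape_of_def by auto
qed

lemma idx_Sigma: "idx mu = (SIGMA p:{1..length mu}. {1..length (mu ! (p - 1))})"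
  unfolding idx_def by auto

lemma finite_idx: "finite (idx mu)"
  unfolding idx_Sigma by auto

lemma idx_fst_ge_1: "\<forall>t\<in>idx mu. 1 \<le> fst t"
  unfolding idx_def by auto

lemma swap_eq: "prod.swap a = (p, i) \<longleftrightarrow> a = (i, p)"
  by (cases a) auto

lemma SST_eq_ssts: "SST la mu = ssts (mshape_of la) (idx mu) (case_prod (ent mu))"
proof (intro set_eqI)
  fix T
  let ?g = "mshape_of la"
  have t1: "(\<forall>x\<in>cells ?g. (snd (T x), fst (T x)) \<in> idx mu) \<longleftrightarrow>
      (\<forall>x\<in>cells ?g. prod.swap (T x) \<in> idx mu)"
    by (simp add: prod.swap_def)
  have t2: "(\<forall>(p, i)\<in>idx mu. card {x \<in> cells ?g. T x = (i, p)} = ent mu p i) \<longleftrightarrow>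
      (\<forall>s\<in>idx mu. card {x \<in> cells ?g. prod.swap (T x) = s} = case_prod (ent mu) s)"
    by (simp add: swap_eq Ball_def split_paired_All)
  show "T \<in> SST la mu \<longleftrightarrow> T \<in> ssts ?g (idx mu) (case_prod (ent mu))"
    unfolding SST_def ssts_def tableau_def mem_Collect_eq Cells_eq_cells t1 t2
    unfolding semistandard_def semistd_on_def Cells_eq_cells by (simp only: conj_assoc)
qed

lemma fin_support_mshape_of: "fin_support (mshape_of la)"
proof -
  have "{(j, r). mshape_of la j r \<noteq> 0} \<subseteq> (SIGMA j:{1..length la}. {..<length (la ! (j - 1))})"
    unfolding mshape_of_def by (auto split: if_splits)
  moreover have "finite (SIGMA j:{1..length la}. {..<length (la ! (j - 1))})"
    by auto
  ultimately show ?thesis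
    unfolding fin_support_def by (rule finite_subset)
qed

lemma msize_mshape_of: "msize (mshape_of la) = (\<Sum>s\<leftarrow>la. sum_list s)"
proof -
  let ?D = "SIGMA j:{1..length la}. {..<length (la ! (j - 1))}"
  have "msize (mshape_of la) = (\<Sum>(j, r)\<in>?D. mshape_of la j r)"
    by (rule msize_eq_sum[OF fin_support_mshape_of]) (auto simp: mshape_of_def split: if_splits)
  also have "\<dots> = (\<Sum>j\<in>{1..length la}. \<Sum>r<length (la ! (j - 1)). mshape_of la j r)"
    by (rule sum.Sigma[symmetric]) auto
  also have "\<dots> = (\<Sum>j\<in>{1..length la}. sum_list (la ! (j - 1)))"
    by (intro sum.cong refl) (auto simp: mshape_of_def sum_list_sum_nth atLeast0LessThan)
  also have "\<dots> = (\<Sum>j<length la. sum_list (la ! j))"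
    by (simp add: sum.atLeast1_atMost_eq)
  also have "\<dots> = (\<Sum>s\<leftarrow>la. sum_list s)"
    by (simp add: sum_list_sum_nth atLeast0LessThan)
  finally show ?thesis .
qed

lemma sum_idx: "(\<Sum>s\<in>idx mu. case_prod (ent mu) s) = (\<Sum>s\<leftarrow>mu. sum_list s)"
proof -
  have "(\<Sum>s\<in>idx mu. case_prod (ent mu) s) =
      (\<Sum>p\<in>{1..length mu}. \<Sum>i\<in>{1..length (mu ! (p - 1))}. ent mu p i)"
    unfolding idx_Sigma by (subst sum.Sigma[symmetric]) auto
  also have "\<dots> = (\<Sum>p\<in>{1..length mu}. sum_list (mu ! (p - 1)))"
  proof (intro sum.cong refl)
    fix p
    show "(\<Sum>i\<in>{1..length (mu ! (p - 1))}. ent mu p i) = sum_list (mu ! (p - 1))"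
      by (simp add: sum.atLeast1_atMost_eq ent_def sum_list_sum_nth atLeast0LessThan)
  qed
  also have "\<dots> = (\<Sum>p<length mu. sum_list (mu ! p))"
    by (simp add: sum.atLeast1_atMost_eq)
  also have "\<dots> = (\<Sum>s\<leftarrow>mu. sum_list s)"
    by (simp add: sum_list_sum_nth atLeast0LessThan)
  finally show ?thesis .
qed

lemma ParMat_eq_dec_mats: "ParMat nu mu = dec_mats (idx nu) (idx mu) (case_prod (ent nu)) (case_prod (ent mu))"
  unfolding ParMat_def dec_mats_def bounded_parts_def
  by (simp add: Ball_def split_paired_All conj_assoc)

lemma length_le_sum_list: "\<forall>x\<in>set s. 0 < (x::nat) \<Longrightarrow> length s \<le> sum_list s"
  by (induction s) auto

lemma finite_Par: "finite (Par l m)"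
proof -
  let ?B = "{xs. set xs \<subseteq> {..m} \<and> length xs \<le> m}"
  have fB: "finite ?B"
    by (rule finite_lists_length_le) simp
  have "Par l m \<subseteq> {la. set la \<subseteq> ?B \<and> length la \<le> l}"
  proof
    fix la
    assume "la \<in> Par l m"
    then have la: "length la = l" "\<forall>s\<in>set la. \<forall>x\<in>set s. 0 < x" "(\<Sum>s\<leftarrow>la. sum_list s) = m"
      unfolding Par_def Lambda_st_def by auto
    have "set la \<subseteq> ?B"
    proof
      fix s
      assume s: "s \<in> set la"
      have "sum_list s \<le> (\<Sum>s\<leftarrow>la. sum_list s)"
        using s by (intro member_le_sum_list) auto
      then have sm: "sum_list s \<le> m"
        using la(3) by simp
      have "set s \<subseteq> {..m}"
        using sm member_le_sum_list[of _ s] by (auto intro: le_trans)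
      moreover have "length s \<le> m"
        using length_le_sum_list[of s] la(2) s sm by auto
      ultimately show "s \<in> ?B"
        by simp
    qed
    then show "la \<in> {la. set la \<subseteq> ?B \<and> length la \<le> l}"
      using la(1) by simp
  qed
  moreover have "finite {la. set la \<subseteq> ?B \<and> length la \<le> l}"
    using fB by (rule finite_lists_length_le)
  ultimately show ?thesis
    by (rule finite_subset)
qed

lemma mshape_of_nonzero:
  assumes "\<forall>s\<in>set la. \<forall>x\<in>set s. 0 < x" "1 \<le> j" "j \<le> length la"
  shows "mshape_of la j r \<noteq> 0 \<longleftrightarrow> r < length (la ! (j - 1))"
proof -
  have jl: "j - 1 < length la"
    using assms(2,3) by simp
  then have m: "la ! (j - 1) \<in> set la"
    by (rule nth_mem)
  show ?thesis
  proof
    assume "mshape_of la j r \<noteq> 0"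
    then show "r < length (la ! (j - 1))"
      unfolding mshape_of_def by (auto split: if_splits)
  next
    assume r: "r < length (la ! (j - 1))"
    then have "la ! (j - 1) ! r \<in> set (la ! (j - 1))"
      by (rule nth_mem)
    then have "0 < la ! (j - 1) ! r"
      using assms(1) m by blast
    then show "mshape_of la j r \<noteq> 0"
      unfolding mshape_of_def using assms(2,3) r by simp
  qed
qed

lemma inj_on_mshape_of: "inj_on mshape_of (Par l m)"
proof (rule inj_onI)
  fix la la'
  assume a: "la \<in> Par l m" "la' \<in> Par l m" "mshape_of la = mshape_of la'"
  have l: "length la = l" "length la' = l" and p: "\<forall>s\<in>set la. \<forall>x\<in>set s. 0 < x" "\<forall>s\<in>set la'. \<forall>x\<in>set s. 0 < x"
    using a(1,2) unfolding Par_def Lambda_st_def by auto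
  show "la = la'"
  proof (rule nth_equalityI)
    show "length la = length la'"
      using l by simp
    fix k
    assume k: "k < length la"
    have j: "1 \<le> Suc k" "Suc k \<le> length la" "Suc k \<le> length la'"
      using k l by auto
    have len: "length (la ! k) = length (la' ! k)"
    proof -
      have "\<And>r. r < length (la ! k) \<longleftrightarrow> r < length (la' ! k)"
        using mshape_of_nonzero[OF p(1) j(1,2)] mshape_of_nonzero[OF p(2) j(1,3)] a(3) by simp
      then show ?thesis
        by (meson linorder_neqE_nat less_irrefl)
    qed
    show "la ! k = la' ! k"
    proof (rule nth_equalityI)
      show "length (la ! k) = length (la' ! k)"
        by (rule len)
      fix r
      assume r: "r < length (la ! k)"
      have "mshape_of la (Suc k) r = mshape_of la' (Suc k) r"
        using a(3) by simp
      then show "la ! k ! r = la' ! k ! r"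
        using r len j unfolding mshape_of_def by simp
    qed
  qed
qed

lemma is_mpartition_mshape_of:
  assumes "la \<in> Par l m"
  shows "is_mpartition (mshape_of la)"
  unfolding is_mpartition_def
proof (intro conjI allI)
  fix r
  show "mshape_of la 0 r = 0"
    unfolding mshape_of_def by simp
next
  fix j r
  show "mshape_of la j (Suc r) \<le> mshape_of la j r"
  proof (cases "1 \<le> j \<and> j \<le> length la \<and> Suc r < length (la ! (j - 1))")
    case True
    then have "j - 1 < length la"
      by linarith
    then have "la ! (j - 1) \<in> set la"
      by (rule nth_mem)
    then have "is_partition (la ! (j - 1))"
      using assms unfolding Par_def by auto
    then have "sorted_wrt (\<ge>) (la ! (j - 1))"
      unfolding is_partition_def by simp
    then have "la ! (j - 1) ! (Suc r) \<le> la ! (j - 1) ! r"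
      using True
      by (auto simp: sorted_wrt_iff_nth_less)
    then show ?thesis
      using True unfolding mshape_of_def by simp
  next
    case False
    then show ?thesis
      unfolding mshape_of_def by auto
  qed
qed

lemma msize_of_ssts:
  assumes T: "T \<in> ssts z S cnt" and V: "fin_support z" and fS: "finite S"
  shows "msize z = (\<Sum>s\<in>S. cnt s)"
proof -
  have eq: "cells z = (\<Union>s\<in>S. {x \<in> cells z. prod.swap (T x) = s})"
    using T unfolding ssts_def by auto
  have "card (cells z) = (\<Sum>s\<in>S. card {x \<in> cells z. prod.swap (T x) = s})"
    by (subst eq, rule card_UN_disjoint) (use fS finite_cells[OF V] in auto)
  also have "\<dots> = (\<Sum>s\<in>S. cnt s)"
    using T unfolding ssts_def by simp
  finally show ?thesis
    unfolding msize_def .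
qed

definition nrows :: "mshape \<Rightarrow> nat \<Rightarrow> nat" where
  "nrows g j = card {r. g j r \<noteq> 0}"

definition list_of_mshape :: "nat \<Rightarrow> mshape \<Rightarrow> nat list list" where
  "list_of_mshape l g = map (\<lambda>j. map (g j) [0..<nrows g j]) [1..<Suc l]"

lemma nonzero_iff_less_nrows:
  assumes "is_mpartition g" "fin_support g"
  shows "g j r \<noteq> 0 \<longleftrightarrow> r < nrows g j"
proof -
  let ?R = "{r. g j r \<noteq> 0}"
  have fin: "finite ?R"
  proof (rule finite_subset)
    show "?R \<subseteq> snd ` {(j, r). g j r \<noteq> 0}"
      by force
    show "finite (snd ` {(j, r). g j r \<noteq> 0})"
      using assms(2) unfolding fin_support_def by simp
  qed
  have "?R = {..<card ?R}"
  proof (cases "?R = {}")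
    case False
    have "?R = {..Max ?R}"
    proof
      show "?R \<subseteq> {..Max ?R}"
        using fin by (auto intro: Max_ge)
      show "{..Max ?R} \<subseteq> ?R"
      proof
        fix r
        assume "r \<in> {..Max ?R}"
        then have "g j (Max ?R) \<le> g j r"
          using is_mpartition_antimono[OF assms(1)] by simp
        moreover have "g j (Max ?R) \<noteq> 0"
          using Max_in[OF fin False] by simp
        ultimately show "r \<in> ?R"
          by simp
      qed
    qed
    then show ?thesis
      by (metis card_atMost lessThan_Suc_atMost)
  qed simp
  then show ?thesis
    unfolding nrows_def by blast
qed

lemma ssts_components_bounded:
  assumes "T \<in> ssts g (idx mu) cnt" "length mu < j"
  shows "g j r = 0"
proof (rule ccontr)
  assume "g j r \<noteq> 0"
  then have cell: "(j, Suc r, 1) \<in> cells g"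
    unfolding mem_cells_iff by simp
  then have "fst (prod.swap (T (j, Suc r, 1))) \<le> length mu"
    using sstsD(2)[OF assms(1) cell] unfolding idx_def by auto
  moreover have "j \<le> snd (T (j, Suc r, 1))"
    using sstsD(4)[OF assms(1)] cell unfolding semistd_on_def by blast
  ultimately show False
    using assms(2) by (simp add: prod.swap_def)
qed

lemma mshape_of_list_of_mshape:
  assumes "is_mpartition g" "fin_support g" "\<And>j r. l < j \<Longrightarrow> g j r = 0"
  shows "mshape_of (list_of_mshape l g) = g"
proof (intro ext)
  fix j r
  have row: "list_of_mshape l g ! (j - 1) = map (g j) [0..<nrows g j]" if "1 \<le> j" "j \<le> l"
  proof -
    have "[1..<Suc l] ! (j - 1) = j"
      using that by (subst nth_upt) auto
    then show ?thesis
      using that unfolding list_of_mshape_def by (simp del: upt_Suc)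
  qed
  show "mshape_of (list_of_mshape l g) j r = g j r"
  proof (cases "1 \<le> j \<and> j \<le> l")
    case True
    then show ?thesis
      using row nonzero_iff_less_nrows[OF assms(1,2), of j r]
      unfolding mshape_of_def list_of_mshape_def by auto
  next
    case False
    then have "g j r = 0"
      using assms(1,3) unfolding is_mpartition_def by (cases "j = 0") auto
    then show ?thesis
      using False unfolding mshape_of_def list_of_mshape_def by auto
  qed
qed

lemma list_of_mshape_in_Par:
  assumes "is_mpartition g" "fin_support g" "\<And>j r. l < j \<Longrightarrow> g j r = 0" "msize g = m"
  shows "list_of_mshape l g \<in> Par l m"
proof -
  let ?la = "list_of_mshape l g"
  have pos: "\<forall>s\<in>set ?la. \<forall>x\<in>set s. 0 < x"
    unfolding list_of_mshape_def using nonzero_iff_less_nrows[OF assms(1,2)] by auto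
  have "\<forall>s\<in>set ?la. sorted_wrt (\<ge>) s"
    unfolding list_of_mshape_def sorted_wrt_iff_nth_less using is_mpartition_antimono[OF assms(1)] by auto
  with pos have "\<forall>s\<in>set ?la. is_partition s"
    unfolding is_partition_def by blast
  moreover have "(\<Sum>s\<leftarrow>?la. sum_list s) = m"
    using msize_mshape_of[of ?la] mshape_of_list_of_mshape[OF assms(1-3)] assms(4) by simp
  ultimately show ?thesis
    unfolding Par_def Lambda_st_def using pos by (simp add: list_of_mshape_def)
qed

lemma ssts_shape_in_Par:
  assumes "is_mpartition g" "fin_support g" "T \<in> ssts g (idx mu) (case_prod (ent mu))" "mu \<in> Lambda_st l m"
  shows "\<exists>la\<in>Par l m. g = mshape_of la"
proof -
  have l: "length mu = l" and "(\<Sum>s\<leftarrow>mu. sum_list s) = m"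
    using assms(4) unfolding Lambda_st_def by auto
  then have "msize g = m"
    using msize_of_ssts[OF assms(3,2) finite_idx] sum_idx by simp
  moreover have "g j r = 0" if "l < j" for j r
    using ssts_components_bounded[OF assms(3)] l that by blast
  ultimately show ?thesis
    using list_of_mshape_in_Par mshape_of_list_of_mshape assms(1,2) by metis
qed

lemma cells_eq_support:
  assumes "T \<in> ssts g S cnt" "\<forall>t\<in>S. 1 \<le> fst t"
  shows "cells g = {x. T x \<noteq> (0, 0)}"
proof (intro set_eqI iffI)
  fix x
  assume x: "x \<in> cells g"
  then have "prod.swap (T x) \<in> S"
    using assms(1) unfolding ssts_def by auto
  then have "1 \<le> fst (prod.swap (T x))"
    using assms(2) by blast
  then show "x \<in> {x. T x \<noteq> (0, 0)}"
    by (auto simp: prod.swap_def)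
next
  fix x
  assume "x \<in> {x. T x \<noteq> (0, 0)}"
  moreover have "\<forall>x. x \<notin> cells g \<longrightarrow> T x = (0, 0)"
    using assms(1) unfolding ssts_def by blast
  ultimately show "x \<in> cells g"
    by blast
qed

section \<open>Both sides as sums over multipartitions\<close>

definition ssts_of :: "nat list list \<Rightarrow> mshape \<Rightarrow> (nat \<times> nat \<times> nat \<Rightarrow> nat \<times> nat) set" where
  "ssts_of mu g = ssts g (idx mu) (case_prod (ent mu))"

definition reachable :: "nat list list \<Rightarrow> mshape set" where
  "reachable mu = {z. walks mempty (up_word_of (idx mu) (case_prod (ent mu))) z \<noteq> 0}"

lemma reachable_mpartition:
  "z \<in> reachable mu \<Longrightarrow> is_mpartition z \<and> fin_support z"
  unfolding reachable_def using walks_mpartition is_mpartition_mempty fin_support_mempty by blast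

lemma card_ParMat:
  "finite (ParMat nu mu) \<and> card (ParMat nu mu) = (\<Sum>z\<in>reachable mu. card (ssts_of nu z) * card (ssts_of mu z))"
proof -
  let ?cm = "case_prod (ent mu)" and ?cn = "case_prod (ent nu)"
  let ?X = "sorted_list_of_set (idx mu)" and ?rows = "rev (sorted_list_of_set (idx nu))"
  let ?ups = "up_word_of (idx mu) ?cm" and ?downs = "down_word_of (idx nu) ?cn"
  have "finite (ParMat nu mu) \<and> card (ParMat nu mu) =
      mat_count fst ?X ?cm (map (\<lambda>r. (fst r, ?cn r)) ?rows)"
    using card_dec_mats[of ?rows ?X ?cn ?cm] idx_fst_ge_1 finite_idx unfolding ParMat_eq_dec_mats by simp
  moreover have "mat_count fst ?X ?cm (map (\<lambda>r. (fst r, ?cn r)) ?rows) =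
      walks mempty (?ups @ ?downs) mempty"
    using walks_up_down_word[of ?X fst ?cm] unfolding up_word_of_def down_word_of_def by simp
  moreover have "\<dots> = (\<Sum>z\<in>reachable mu. walks mempty ?ups z * walks z ?downs mempty)"
    unfolding reachable_def by (rule walks_append[OF finite_walk_ends]) simp
  moreover have "\<dots> = (\<Sum>z\<in>reachable mu. card (ssts_of nu z) * card (ssts_of mu z))"
  proof (rule sum.cong[OF refl])
    fix z
    assume "z \<in> reachable mu"
    then have "is_mpartition z \<and> fin_support z"
      by (rule reachable_mpartition)
    then show "walks mempty ?ups z * walks z ?downs mempty = card (ssts_of nu z) * card (ssts_of mu z)"
      using card_ssts_eq_walks_up[of "idx mu"] card_ssts_eq_walks_down[of "idx nu"] finite_idx
      unfolding ssts_of_def by simp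
  qed
  ultimately show ?thesis
    by simp
qed

lemma SST_overlap_imp_eq:
  assumes "la \<in> Par l m" "la' \<in> Par l m" "SST la mu \<inter> SST la' mu \<noteq> {}"
  shows "la = la'"
proof -
  obtain T where "T \<in> SST la mu" "T \<in> SST la' mu"
    using assms(3) by blast
  then have "cells (mshape_of la) = cells (mshape_of la')"
    using cells_eq_support idx_fst_ge_1 unfolding SST_eq_ssts by metis
  then show ?thesis
    using cells_inject inj_on_mshape_of[of l m] assms(1,2) unfolding inj_on_def by blast
qed

lemma card_ssts_of_mshape_of:
  assumes "la \<in> Par l m"
  shows "card (ssts_of mu (mshape_of la)) = walks mempty (up_word_of (idx mu) (case_prod (ent mu))) (mshape_of la)"
  unfolding ssts_of_def
  by (rule card_ssts_eq_walks_up[OF finite_idx fin_support_mshape_of is_mpartition_mshape_of[OF assms]])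

lemma reachable_in_Par:
  assumes "mu \<in> Lambda_st l m" "z \<in> reachable mu" "ssts_of mu z \<noteq> {}"
  shows "z \<in> mshape_of ` Par l m"
proof -
  obtain T where "T \<in> ssts z (idx mu) (case_prod (ent mu))"
    using assms(3) unfolding ssts_of_def by blast
  with reachable_mpartition[OF assms(2)] show ?thesis
    using ssts_shape_in_Par[OF _ _ _ assms(1)] by blast
qed

lemma card_SST2:
  assumes "mu \<in> Lambda_st l m"
  shows "finite (SST2 l m nu mu) \<and> card (SST2 l m nu mu) =
      (\<Sum>z\<in>reachable mu. card (ssts_of nu z) * card (ssts_of mu z))"
proof -
  let ?F = "\<lambda>z. card (ssts_of nu z) * card (ssts_of mu z)"
  have fin: "finite (SST la nu \<times> SST la mu)" for la
    unfolding SST_eq_ssts using finite_ssts[OF fin_support_mshape_of finite_idx] by blast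
  have "card (SST2 l m nu mu) = (\<Sum>la\<in>Par l m. card (SST la nu \<times> SST la mu))"
    unfolding SST2_def
  proof (rule card_UN_disjoint)
    show "\<forall>la\<in>Par l m. \<forall>la'\<in>Par l m. la \<noteq> la' \<longrightarrow>
        (SST la nu \<times> SST la mu) \<inter> (SST la' nu \<times> SST la' mu) = {}"
      using SST_overlap_imp_eq[where mu = nu] by blast
  qed (use finite_Par fin in auto)
  also have "\<dots> = (\<Sum>la\<in>Par l m. ?F (mshape_of la))"
    by (simp add: card_cartesian_product SST_eq_ssts ssts_of_def)
  also have "\<dots> = (\<Sum>z\<in>mshape_of ` Par l m. ?F z)"
    using sum.reindex[OF inj_on_mshape_of, of ?F] by simp
  also have "\<dots> = (\<Sum>z\<in>reachable mu. ?F z)"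
  proof (rule sum.mono_neutral_cong)
    show "finite (mshape_of ` Par l m)" "finite (reachable mu)"
      using finite_Par finite_walk_ends unfolding reachable_def by auto
    show "?F z = 0" if "z \<in> mshape_of ` Par l m - reachable mu" for z
      using that card_ssts_of_mshape_of unfolding reachable_def by auto
    show "?F z = 0" if "z \<in> reachable mu - mshape_of ` Par l m" for z
      using that reachable_in_Par[OF assms] by (auto simp: card_gt_0_iff)
  qed simp
  finally show ?thesis
    unfolding SST2_def using finite_Par fin by auto
qed

theorem theorem5p6:
  fixes l m :: nat and nu mu :: "nat list list"
  assumes "1 \<le> l" and "nu \<in> Lambda_st l m" and "mu \<in> Lambda_st l m"
  shows "\<exists>\<phi>. bij_betw \<phi> (ParMat nu mu) (SST2 l m nu mu)"
  using card_ParMat[of nu mu] card_SST2[OF assms(3), of nu] by (auto intro: finite_same_card_bij)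

end
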